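(* Let $X$ be a compact interval, $m$ normalized Lebesgue measure on $X$, $\Omega$ a measurable space, and $\{T_\omega\}_{\omega\in\Omega}$ a family of maps $T_\omega\colon X\to X$ as described in the context, with inverse branches $g_{z,\omega}$, $z\in Z$. Let $\{\mathbb{P}_\epsilon\}_{\epsilon\in V}$ be a family of probability measures on $\Omega$, $V$ a neighbourhood of $0$, and let $L_{\mathbb{P}_\epsilon}$ be the associated random transfer operators. Assume: (B) for $\epsilon\in V$ the operators $L_{\mathbb{P}_\epsilon}$ admit a uniform spectral gap on $C^1(X)$, and the random system $(\Omega,\{T_\omega\},\mathbb{P}_\epsilon)$ admits a unique stationary density $h_\epsilon\in C^2(X)$; (B1) for $\Phi=h_0$, the partial derivatives $\partial_\epsilon\psi_z(\epsilon,x)$, $\partial_x\psi_z(\epsilon,x)$, $\partial_x\partial_\epsilon\psi_z(\epsilon,x)$, $\partial_\epsilon\partial_x\psi_z(\epsilon,x)$ exist and are jointly continuous in $(\epsilon,x)\in V\times X$, and for $i=0,1$, $\sum_{z\in Z}\sup_{\epsilon\in V}\sup_{x\in X}|\partial_\epsilon\psi_z^{(i)}(\epsilon,x)|<\infty$, where $\psi_z^{(0)}=\psi_z$, $\psi_z^{(1)}=\partial_x\psi_z$; (B2) for every $\Phi\in C^1(X)$, $\psi_z(\epsilon,x)$ and $\partial_x\psi_z(\epsilon,x)$ exist and are jointly continuous, and for $i=0,1$, $\sum_{z\in Z}\sup_{\epsilon\in V}\sup_{x\in X}|\psi_z^{(i)}(\epsilon,x)|<\infty$. Then there exists $h^*\in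 C^1(X)$ such that $\left\|\frac{h_\epsilon-h_0}{\epsilon}-h^*\right\|_{C^1}\to 0$ as $\epsilon\to0$, and $$h^*=(I-L_{\mathbb{P}_0})^{-1}\,\partial_\epsilon L_{\mathbb{P}_\epsilon}h_0\big|_{\epsilon=0},\qquad \partial_\epsilon L_{\mathbb{P}_\epsilon}h_0\big|_{\epsilon=0}=\partial_\epsilon\sum_{z\in Z}\int_\Omega [h_0\circ g_{z,\omega}\,|g_{z,\omega}'|]\,d\mathbb{P}_\epsilon(\omega)\Big|_{\epsilon=0}.$$
   Context: For each $\omega\in\Omega$ there is a finite or countable set $Z$ (common to all $\omega$, with empty branches allowed and ignored in sums) and a partition mod $0$ of $X$ into open intervals $X_{z,\omega}$, $z\in Z$, such that $T_\omega|_{X_{z,\omega}}$ is $C^3$ and onto $X$; $g_{z,\omega}\colon X\to X_{z,\omega}$ is its inverse. The transfer operator of $T_\omega$ is $L_{T_\omega}\Phi=\sum_{z\in Z}\Phi\circ g_{z,\omega}|g_{z,\omega}'|$, and $L_{\mathbb{P}}\Phi=\int_\Omega L_{T_\omega}\Phi\,d\mathbb{P}(\omega)$. A stationary density is $h\in L^1(m)$, $h\ge0$, $\int h\,dm=1$, with $L_{\mathbb{P}}h=h$ (density of an absolutely continuous measure $\mu$ with $\int\int\phi\circ T_\omega\,d\mathbb{P}\,d\mu=\int\phi\,d\mu$ for bounded measurable $\phi$). For $\Phi\in L^1(X)$ and $z\in Z$, $\psi_z(\epsilon,x)=\int_\Omega[\Phi\circ g_{z,\omega}|g_{z,\omega}'|](x)\,d\mathbb{P}_\epsilon(\omega)$.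 A family of operators $L_\epsilon$ has a uniform spectral gap on a Banach space $\mathcal{B}$ of functions if there are $\theta\in(0,1)$ and $C>0$ independent of $\epsilon$ such that $\|L_\epsilon^n\phi\|_{\mathcal B}\le C\theta^n\|\phi\|_{\mathcal B}$ for all $n\ge1$ and all $\phi\in\mathcal{B}$ with $\int\phi\,dm=0$. $\|f\|_{C^1}=\|f\|_\infty+\|f'\|_\infty$. The inverse $(I-L_{\mathbb{P}_0})^{-1}$ is taken on zero-average $C^1$ functions. *)

theory Defs
  imports "HOL-Probability.Probability"
begin

definition mX :: "real \<Rightarrow> real \<Rightarrow> real measure" where
  "mX a b = uniform_measure lborel {a..b}"

fun Ck_on :: "nat \<Rightarrow> real set \<Rightarrow> (real \<Rightarrow> real) \<Rightarrow> bool" where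
  "Ck_on 0 S f = continuous_on S f"
| "Ck_on (Suc k) S f = ((\<forall>x\<in>S. f differentiable (at x within S)) \<and>
      Ck_on k S (\<lambda>x. vector_derivative f (at x within S)))"

definition dX :: "real \<Rightarrow> real \<Rightarrow> (real \<Rightarrow> real) \<Rightarrow> real \<Rightarrow> real" where
  "dX a b f x = vector_derivative f (at x within {a..b})"

definition C1norm :: "real \<Rightarrow> real \<Rightarrow> (real \<Rightarrow> real) \<Rightarrow> real" where
  "C1norm a b f = (SUP x\<in>{a..b}. \<bar>f x\<bar>) + (SUP x\<in>{a..b}. \<bar>dX a b f x\<bar>)"

text \<open>Branch structure of the random maps: for every omega, the intervals I z omega
  (z in Z, possibly empty) form a partition mod 0 of X into open intervals; T omega is C^3 on each
  nonempty branch and maps it bijectively onto X (mod the endpoints); g z omega is the inverse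
  branch, continuously extended to X.\<close>
definition branch_system ::
  "real \<Rightarrow> real \<Rightarrow> nat set \<Rightarrow> (nat \<Rightarrow> 'w \<Rightarrow> real set) \<Rightarrow> ('w \<Rightarrow> real \<Rightarrow> real)
   \<Rightarrow> (nat \<Rightarrow> 'w \<Rightarrow> real \<Rightarrow> real) \<Rightarrow> bool" where
  "branch_system a b Z I T g \<longleftrightarrow> a < b \<and> (\<forall>\<omega>.
      (\<forall>x\<in>{a..b}. T \<omega> x \<in> {a..b}) \<and>
      disjoint_family_on (\<lambda>z. I z \<omega>) Z \<and>
      ({a..b} - (\<Union>z\<in>Z. I z \<omega>)) \<in> null_sets lborel \<and>
      (\<forall>z\<in>Z. I z \<omega> = {} \<or>
         ((\<exists>c d. a \<le> c \<and> c < d \<and> d \<le> b \<and> I z \<omega> = {c<..<d}) \<and>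
          Ck_on 3 (I z \<omega>) (T \<omega>) \<and>
          bij_betw (T \<omega>) (I z \<omega>) {a<..<b} \<and>
          (\<forall>x\<in>{a<..<b}. g z \<omega> x \<in> I z \<omega> \<and> T \<omega> (g z \<omega> x) = x) \<and>
          g z \<omega> ` {a..b} \<subseteq> closure (I z \<omega>) \<and>
          continuous_on {a..b} (g z \<omega>))))"

definition bterm ::
  "real \<Rightarrow> real \<Rightarrow> (nat \<Rightarrow> 'w \<Rightarrow> real set) \<Rightarrow> (nat \<Rightarrow> 'w \<Rightarrow> real \<Rightarrow> real)
   \<Rightarrow> (real \<Rightarrow> real) \<Rightarrow> nat \<Rightarrow> 'w \<Rightarrow> real \<Rightarrow> real" where
  "bterm a b I g \<Phi> z \<omega> x =
     (if I z \<omega> = {} then 0 else \<Phi> (g z \<omega> x) * \<bar>dX a b (g z \<omega>) x\<bar>)"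

definition LT ::
  "real \<Rightarrow> real \<Rightarrow> nat set \<Rightarrow> (nat \<Rightarrow> 'w \<Rightarrow> real set) \<Rightarrow> (nat \<Rightarrow> 'w \<Rightarrow> real \<Rightarrow> real)
   \<Rightarrow> 'w \<Rightarrow> (real \<Rightarrow> real) \<Rightarrow> real \<Rightarrow> real" where
  "LT a b Z I g \<omega> \<Phi> x = (\<Sum>\<^sub>\<infinity>z\<in>Z. bterm a b I g \<Phi> z \<omega> x)"

definition LP ::
  "real \<Rightarrow> real \<Rightarrow> nat set \<Rightarrow> (nat \<Rightarrow> 'w \<Rightarrow> real set) \<Rightarrow> (nat \<Rightarrow> 'w \<Rightarrow> real \<Rightarrow> real)
   \<Rightarrow> 'w measure \<Rightarrow> (real \<Rightarrow> real) \<Rightarrow> real \<Rightarrow> real" where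
  "LP a b Z I g Q \<Phi> x = (\<integral>\<omega>. LT a b Z I g \<omega> \<Phi> x \<partial>Q)"

definition psi ::
  "real \<Rightarrow> real \<Rightarrow> (nat \<Rightarrow> 'w \<Rightarrow> real set) \<Rightarrow> (nat \<Rightarrow> 'w \<Rightarrow> real \<Rightarrow> real)
   \<Rightarrow> (real \<Rightarrow> 'w measure) \<Rightarrow> (real \<Rightarrow> real) \<Rightarrow> nat \<Rightarrow> real \<Rightarrow> real \<Rightarrow> real" where
  "psi a b I g P \<Phi> z \<epsilon> x = (\<integral>\<omega>. bterm a b I g \<Phi> z \<omega> x \<partial>(P \<epsilon>))"

definition d_eps :: "(real \<Rightarrow> real \<Rightarrow> real) \<Rightarrow> real \<Rightarrow> real \<Rightarrow> real" where
  "d_eps f \<epsilon> x = deriv (\<lambda>e. f e x) \<epsilon>"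

definition d_x :: "real \<Rightarrow> real \<Rightarrow> (real \<Rightarrow> real \<Rightarrow> real) \<Rightarrow> real \<Rightarrow> real \<Rightarrow> real" where
  "d_x a b f \<epsilon> x = dX a b (\<lambda>y. f \<epsilon> y) x"

definition stationary_density :: "real \<Rightarrow> real \<Rightarrow> ((real \<Rightarrow> real) \<Rightarrow> real \<Rightarrow> real) \<Rightarrow> (real \<Rightarrow> real) \<Rightarrow> bool" where
  "stationary_density a b L h \<longleftrightarrow>
     integrable (mX a b) h \<and> (AE x in mX a b. h x \<ge> 0) \<and> integral\<^sup>L (mX a b) h = 1 \<and>
     (AE x in mX a b. L h x = h x)"

definition uniform_spectral_gap_C1 ::
  "real \<Rightarrow> real \<Rightarrow> real set \<Rightarrow> (real \<Rightarrow> (real \<Rightarrow> real) \<Rightarrow> real \<Rightarrow> real) \<Rightarrow> bool" where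
  "uniform_spectral_gap_C1 a b V L \<longleftrightarrow>
     (\<forall>\<epsilon>\<in>V. \<forall>\<phi>. Ck_on 1 {a..b} \<phi> \<longrightarrow> Ck_on 1 {a..b} (L \<epsilon> \<phi>)) \<and>
     (\<exists>\<theta> C. 0 < \<theta> \<and> \<theta> < 1 \<and> 0 < C \<and>
        (\<forall>\<epsilon>\<in>V. \<forall>n\<ge>1. \<forall>\<phi>. Ck_on 1 {a..b} \<phi> \<and> integral\<^sup>L (mX a b) \<phi> = 0 \<longrightarrow>
            C1norm a b ((L \<epsilon> ^^ n) \<phi>) \<le> C * \<theta> ^ n * C1norm a b \<phi>))"

definition sum_sup :: "nat set \<Rightarrow> real set \<Rightarrow> real set \<Rightarrow> (nat \<Rightarrow> real \<Rightarrow> real \<Rightarrow> real) \<Rightarrow> ennreal" where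
  "sum_sup Z V S F = (\<Sum>\<^sub>\<infinity>z\<in>Z. (SUP \<epsilon>\<in>V. SUP x\<in>S. ennreal \<bar>F z \<epsilon> x\<bar>))"

end

theory Submission
  imports Defs
begin

text \<open>
  Let \<open>u\<^sub>\<epsilon> = (h\<^sub>\<epsilon> - h\<^sub>0) / \<epsilon>\<close> and \<open>w\<^sub>\<epsilon> = (L\<^sub>\<epsilon> h\<^sub>0 - h\<^sub>0) / \<epsilon>\<close>. Since
  \<open>L\<^sub>\<epsilon> h\<^sub>\<epsilon> = h\<^sub>\<epsilon>\<close>, one has \<open>u\<^sub>\<epsilon> - L\<^sub>\<epsilon> u\<^sub>\<epsilon> = w\<^sub>\<epsilon>\<close>. Writing \<open>L\<^sub>\<epsilon>\<close> as the series
  over the branches of the terms \<open>\<psi>\<^sub>z\<close>, the summable bounds of (B1) and (B2) and Tannery's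
  theorem give \<open>w\<^sub>\<epsilon> \<rightarrow> D = \<partial>\<^sub>\<epsilon> L\<^sub>\<epsilon> h\<^sub>0\<close> and \<open>L\<^sub>\<epsilon> \<phi> \<rightarrow> L\<^sub>0 \<phi>\<close> in \<open>C\<^sup>1\<close>.
  The uniform spectral gap forces every \<open>L\<^sub>\<epsilon>\<close> to preserve means and makes \<open>I - L\<^sub>\<epsilon>\<close>
  invertible on zero-mean \<open>C\<^sup>1\<close> functions, with inverse bounded by \<open>C / (1 - \<theta>)\<close> uniformly in
  \<open>\<epsilon>\<close>; in particular \<open>h\<^sup>* = \<Sum>\<^sub>k L\<^sub>0\<^sup>k D\<close> solves \<open>h\<^sup>* - L\<^sub>0 h\<^sup>* = D\<close>. Finally
  \<open>(I - L\<^sub>\<epsilon>)(u\<^sub>\<epsilon> - h\<^sup>*) = (w\<^sub>\<epsilon> - D) + (L\<^sub>\<epsilon> - L\<^sub>0) h\<^sup>*\<close> tends to \<open>0\<close> in \<open>C\<^sup>1\<close>, and hence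
  so does \<open>u\<^sub>\<epsilon> - h\<^sup>*\<close>.
\<close>

section \<open>\<open>C\<^sup>1\<close> functions on a compact interval\<close>

lemma C1_on_iff:
  "Ck_on 1 S f \<longleftrightarrow> (\<forall>x\<in>S. f differentiable (at x within S)) \<and>
     continuous_on S (\<lambda>x. vector_derivative f (at x within S))"
  by simp

lemma C2_imp_C1: "Ck_on 2 S f \<Longrightarrow> Ck_on 1 S f"
  by (simp add: numeral_2_eq_2 continuous_on_eq_continuous_within
      differentiable_imp_continuous_within)

(* One_nat_def would rewrite Ck_on 1 into Ck_on (Suc 0), out of reach of the lemmas below. *)
declare Ck_on.simps [simp del] One_nat_def [simp del]

lemma C1_imp_continuous_on: "Ck_on 1 S f \<Longrightarrow> continuous_on S f"
  unfolding C1_on_iff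
  by (auto simp: continuous_on_eq_continuous_within intro: differentiable_imp_continuous_within)

lemma continuous_on_dX: "Ck_on 1 {a..b} f \<Longrightarrow> continuous_on {a..b} (dX a b f)"
  unfolding C1_on_iff by (simp add: dX_def)

lemma dX_has_real_derivative:
  assumes "Ck_on 1 {a..b} f" "x \<in> {a..b}"
  shows "(f has_real_derivative dX a b f x) (at x within {a..b})"
  using assms unfolding C1_on_iff
  by (simp add: dX_def has_real_derivative_iff_has_vector_derivative vector_derivative_works)

lemma dX_eqI:
  assumes "a < b" "x \<in> {a..b}" "(f has_real_derivative D) (at x within {a..b})"
  shows "dX a b f x = D"
  using assms
  by (simp add: dX_def has_real_derivative_iff_has_vector_derivative
      vector_derivative_within_closed_interval)

lemma dX_cong:
  assumes "x \<in> {a..b}" "\<And>y. y \<in> {a..b} \<Longrightarrow> f y = g y"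
  shows "dX a b f x = dX a b g x"
proof -
  have "(f has_vector_derivative D) (at x within {a..b}) \<longleftrightarrow>
        (g has_vector_derivative D) (at x within {a..b})" for D
    using has_vector_derivative_transform[of x "{a..b}" g f D]
      has_vector_derivative_transform[of x "{a..b}" f g D] assms
    by auto
  then show ?thesis
    unfolding dX_def vector_derivative_def by simp
qed

lemma C1_onI:
  assumes "a < b" and der: "\<And>x. x \<in> {a..b} \<Longrightarrow> (f has_real_derivative f' x) (at x within {a..b})"
    and "continuous_on {a..b} f'"
  shows "Ck_on 1 {a..b} f"
proof -
  have "continuous_on {a..b} (dX a b f)"
    using assms(3) by (rule continuous_on_eq) (simp add: dX_eqI[OF assms(1) _ der])
  moreover have "f differentiable (at x within {a..b})" if "x \<in> {a..b}" for x
    using der[OF that] unfolding real_differentiable_def by blast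
  ultimately show ?thesis
    unfolding C1_on_iff by (simp add: dX_def)
qed

lemma C1_cong:
  assumes "Ck_on 1 {a..b} f" "\<And>y. y \<in> {a..b} \<Longrightarrow> f y = g y"
  shows "Ck_on 1 {a..b} g"
proof -
  have "(g has_real_derivative dX a b f x) (at x within {a..b})" if "x \<in> {a..b}" for x
    using has_derivative_transform[OF that _ dX_has_real_derivative[OF assms(1) that,
          unfolded has_field_derivative_def], of g] assms(2)
    by (simp add: has_field_derivative_def)
  then have "g differentiable (at x within {a..b})" if "x \<in> {a..b}" for x
    using that unfolding real_differentiable_def by blast
  moreover have "continuous_on {a..b} (dX a b g)"
    using continuous_on_dX[OF assms(1)] by (rule continuous_on_eq) (use assms(2) dX_cong in blast)
  ultimately show ?thesis
    unfolding C1_on_iff by (simp add: dX_def)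
qed

lemma
  assumes "a < b" "Ck_on 1 {a..b} f" "Ck_on 1 {a..b} g"
  shows C1_linear: "Ck_on 1 {a..b} (\<lambda>x. c * f x + d * g x)"
    and dX_linear: "x \<in> {a..b} \<Longrightarrow> dX a b (\<lambda>x. c * f x + d * g x) x = c * dX a b f x + d * dX a b g x"
proof -
  have der: "((\<lambda>x. c * f x + d * g x) has_real_derivative c * dX a b f x + d * dX a b g x)
      (at x within {a..b})" if "x \<in> {a..b}" for x
    using dX_has_real_derivative[OF assms(2) that] dX_has_real_derivative[OF assms(3) that]
    by (auto intro!: derivative_eq_intros)
  show "Ck_on 1 {a..b} (\<lambda>x. c * f x + d * g x)"
    using assms by (intro C1_onI[OF assms(1) der] continuous_intros continuous_on_dX)
  show "x \<in> {a..b} \<Longrightarrow> dX a b (\<lambda>x. c * f x + d * g x) x = c * dX a b f x + d * dX a b g x"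
    by (rule dX_eqI[OF assms(1) _ der])
qed

lemma
  assumes "a < b" "Ck_on 1 {a..b} f" "Ck_on 1 {a..b} g"
  shows C1_diff: "Ck_on 1 {a..b} (\<lambda>x. f x - g x)"
    and dX_diff: "x \<in> {a..b} \<Longrightarrow> dX a b (\<lambda>x. f x - g x) x = dX a b f x - dX a b g x"
  using C1_linear[OF assms, of 1 "-1"] dX_linear[OF assms, of _ 1 "-1"] by simp_all

lemma
  assumes "a < b"
  shows C1_const: "Ck_on 1 {a..b} (\<lambda>x. c)"
    and dX_const: "x \<in> {a..b} \<Longrightarrow> dX a b (\<lambda>x. c) x = 0"
proof -
  have der: "((\<lambda>x. c) has_real_derivative 0) (at x within {a..b})" for x
    by (rule DERIV_const)
  show "Ck_on 1 {a..b} (\<lambda>x. c)"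
    by (rule C1_onI[OF assms der]) simp
  show "x \<in> {a..b} \<Longrightarrow> dX a b (\<lambda>x. c) x = 0"
    by (rule dX_eqI[OF assms _ der])
qed

lemma
  assumes "a < b" "finite A" "\<And>i. i \<in> A \<Longrightarrow> Ck_on 1 {a..b} (f i)"
  shows C1_sum: "Ck_on 1 {a..b} (\<lambda>x. \<Sum>i\<in>A. f i x)"
    and dX_sum: "x \<in> {a..b} \<Longrightarrow> dX a b (\<lambda>x. \<Sum>i\<in>A. f i x) x = (\<Sum>i\<in>A. dX a b (f i) x)"
proof -
  have der: "((\<lambda>x. \<Sum>i\<in>A. f i x) has_real_derivative (\<Sum>i\<in>A. dX a b (f i) x)) (at x within {a..b})"
    if "x \<in> {a..b}" for x
    using dX_has_real_derivative[OF assms(3) that] by (auto intro!: derivative_eq_intros)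
  show "Ck_on 1 {a..b} (\<lambda>x. \<Sum>i\<in>A. f i x)"
    using assms by (intro C1_onI[OF assms(1) der] continuous_on_sum continuous_on_dX)
  show "x \<in> {a..b} \<Longrightarrow> dX a b (\<lambda>x. \<Sum>i\<in>A. f i x) x = (\<Sum>i\<in>A. dX a b (f i) x)"
    by (rule dX_eqI[OF assms(1) _ der])
qed

lemma abs_le_SUP_abs:
  fixes f :: "'a::topological_space \<Rightarrow> real"
  assumes "compact S" "continuous_on S f" "x \<in> S"
  shows "\<bar>f x\<bar> \<le> (SUP y\<in>S. \<bar>f y\<bar>)"
proof (rule cSUP_upper[OF assms(3)])
  have "compact ((\<lambda>y. \<bar>f y\<bar>) ` S)"
    using assms by (intro compact_continuous_image continuous_intros)
  then show "bdd_above ((\<lambda>y. \<bar>f y\<bar>) ` S)"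
    by (simp add: bounded_imp_bdd_above compact_imp_bounded)
qed

lemma
  assumes "Ck_on 1 {a..b} f" "x \<in> {a..b}"
  shows abs_le_C1norm: "\<bar>f x\<bar> \<le> C1norm a b f"
    and abs_dX_le_C1norm: "\<bar>dX a b f x\<bar> \<le> C1norm a b f"
proof -
  have "\<bar>f x\<bar> \<le> (SUP y\<in>{a..b}. \<bar>f y\<bar>)" "\<bar>dX a b f x\<bar> \<le> (SUP y\<in>{a..b}. \<bar>dX a b f y\<bar>)"
    using assms C1_imp_continuous_on continuous_on_dX by (blast intro: abs_le_SUP_abs)+
  moreover have "0 \<le> \<bar>f x\<bar>" "0 \<le> \<bar>dX a b f x\<bar>"
    by auto
  ultimately show "\<bar>f x\<bar> \<le> C1norm a b f" "\<bar>dX a b f x\<bar> \<le> C1norm a b f"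
    unfolding C1norm_def by linarith+
qed

lemma C1norm_nonneg: "Ck_on 1 {a..b} f \<Longrightarrow> a \<le> b \<Longrightarrow> 0 \<le> C1norm a b f"
  using abs_le_C1norm[of a b f a] by fastforce

lemma C1norm_le:
  assumes "a \<le> b" "\<And>x. x \<in> {a..b} \<Longrightarrow> \<bar>f x\<bar> \<le> A" "\<And>x. x \<in> {a..b} \<Longrightarrow> \<bar>dX a b f x\<bar> \<le> B"
  shows "C1norm a b f \<le> A + B"
  unfolding C1norm_def using assms by (intro add_mono cSUP_least) auto

lemma C1norm_cong:
  assumes "\<And>y. y \<in> {a..b} \<Longrightarrow> f y = g y"
  shows "C1norm a b f = C1norm a b g"
proof -
  have "(SUP x\<in>{a..b}. \<bar>f x\<bar>) = (SUP x\<in>{a..b}. \<bar>g x\<bar>)"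
    by (rule SUP_cong) (simp_all add: assms)
  moreover have "(SUP x\<in>{a..b}. \<bar>dX a b f x\<bar>) = (SUP x\<in>{a..b}. \<bar>dX a b g x\<bar>)"
    using dX_cong[OF _ assms] by (intro SUP_cong) auto
  ultimately show ?thesis
    by (simp add: C1norm_def)
qed

lemma C1norm_add_le:
  assumes "a < b" "Ck_on 1 {a..b} f" "Ck_on 1 {a..b} g"
  shows "C1norm a b (\<lambda>x. f x + g x) \<le> C1norm a b f + C1norm a b g"
proof -
  define sf sg sf' sg' where "sf = (SUP x\<in>{a..b}. \<bar>f x\<bar>)" "sg = (SUP x\<in>{a..b}. \<bar>g x\<bar>)"
    "sf' = (SUP x\<in>{a..b}. \<bar>dX a b f x\<bar>)" "sg' = (SUP x\<in>{a..b}. \<bar>dX a b g x\<bar>)"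
  have "C1norm a b (\<lambda>x. f x + g x) \<le> (sf + sg) + (sf' + sg')"
  proof (rule C1norm_le)
    fix x assume x: "x \<in> {a..b}"
    have "\<bar>f x\<bar> \<le> sf" "\<bar>g x\<bar> \<le> sg" "\<bar>dX a b f x\<bar> \<le> sf'" "\<bar>dX a b g x\<bar> \<le> sg'"
      unfolding sf_sg_sf'_sg'_def using assms(2,3) x
      by (blast intro: abs_le_SUP_abs C1_imp_continuous_on continuous_on_dX)+
    then show "\<bar>f x + g x\<bar> \<le> sf + sg" "\<bar>dX a b (\<lambda>x. f x + g x) x\<bar> \<le> sf' + sg'"
      using dX_linear[OF assms x, of 1 1] by simp_all
  qed (use assms in simp)
  then show ?thesis
    unfolding C1norm_def sf_sg_sf'_sg'_def by linarith
qed

lemma C1norm_sum_le: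
  assumes "a < b" "finite A" "\<And>i. i \<in> A \<Longrightarrow> Ck_on 1 {a..b} (f i)"
  shows "C1norm a b (\<lambda>x. \<Sum>i\<in>A. f i x) \<le> (\<Sum>i\<in>A. C1norm a b (f i))"
  using assms(2,3)
proof (induction A rule: finite_induct)
  case empty
  have "C1norm a b (\<lambda>x. 0) \<le> 0 + 0"
    by (rule C1norm_le) (use assms(1) dX_const[OF assms(1)] in auto)
  then show ?case
    by simp
next
  case (insert i A)
  then have "C1norm a b (\<lambda>x. f i x + (\<Sum>i\<in>A. f i x)) \<le> C1norm a b (f i) + C1norm a b (\<lambda>x. \<Sum>i\<in>A. f i x)"
    by (intro C1norm_add_le C1_sum assms(1)) auto
  with insert show ?case
    by simp
qed

section \<open>Uniform limits of \<open>C\<^sup>1\<close> functions\<close>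

lemma
  fixes u :: "nat \<Rightarrow> real \<Rightarrow> real"
  assumes ab: "a < b" and C1: "\<And>n. Ck_on 1 {a..b} (u n)"
    and lim: "uniform_limit {a..b} u g sequentially"
    and lim': "uniform_limit {a..b} (\<lambda>n. dX a b (u n)) G sequentially"
  shows C1_uniform_limit_sequentially: "Ck_on 1 {a..b} g"
    and dX_uniform_limit_sequentially: "x \<in> {a..b} \<Longrightarrow> dX a b g x = G x"
proof -
  have der: "(u n has_derivative (\<lambda>h. dX a b (u n) x * h)) (at x within {a..b})"
    if "x \<in> {a..b}" for n x
    using dX_has_real_derivative[OF C1 that] by (simp add: has_field_derivative_def)
  have close: "\<forall>\<^sub>F n in sequentially. \<forall>x\<in>{a..b}. \<forall>h. norm (dX a b (u n) x * h - G x * h) \<le> e * norm h"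
    if "e > 0" for e
    using uniform_limitD[OF lim' that]
  proof eventually_elim
    case (elim n)
    show ?case
    proof (intro ballI allI)
      fix x h assume "x \<in> {a..b}"
      then have "\<bar>dX a b (u n) x - G x\<bar> \<le> e"
        using bspec[OF elim \<open>x \<in> {a..b}\<close>] by (simp add: dist_real_def)
      then show "norm (dX a b (u n) x * h - G x * h) \<le> e * norm h"
        by (simp add: left_diff_distrib[symmetric] abs_mult mult_right_mono)
    qed
  qed
  have pointwise: "(\<lambda>n. u n x) \<longlonglongrightarrow> g x" if "x \<in> {a..b}" for x
    by (rule tendsto_uniform_limitI[OF lim that])
  have "\<exists>g'. \<forall>x\<in>{a..b}. (\<lambda>n. u n x) \<longlonglongrightarrow> g' x \<and>
      (g' has_derivative (\<lambda>h. G x * h)) (at x within {a..b})"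
    by (rule has_derivative_sequence[OF convex_real_interval(5) der close _ pointwise])
      (use ab in auto)
  then obtain g' where g': "\<And>x. x \<in> {a..b} \<Longrightarrow> (\<lambda>n. u n x) \<longlonglongrightarrow> g' x \<and>
      (g' has_derivative (\<lambda>h. G x * h)) (at x within {a..b})"
    by blast
  have der_g: "(g has_real_derivative G x) (at x within {a..b})" if "x \<in> {a..b}" for x
  proof -
    have "g y = g' y" if "y \<in> {a..b}" for y
      using LIMSEQ_unique[OF pointwise[OF that]] g'[OF that] by blast
    then show ?thesis
      using has_derivative_transform[OF \<open>x \<in> {a..b}\<close> _ conjunct2[OF g'[OF that]], of g]
      by (simp add: has_field_derivative_def)
  qed
  have "continuous_on {a..b} G"
    using lim' by (rule uniform_limit_theorem[rotated])
      (simp_all add: always_eventually continuous_on_dX[OF C1])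
  then show "Ck_on 1 {a..b} g"
    using C1_onI[of a b g G] ab der_g by blast
  show "x \<in> {a..b} \<Longrightarrow> dX a b g x = G x"
    by (rule dX_eqI[OF ab _ der_g])
qed

lemma
  fixes f :: "'i \<Rightarrow> real \<Rightarrow> real" and s :: "nat \<Rightarrow> 'i"
  assumes ab: "a < b" and s: "filterlim s F sequentially"
    and C1: "eventually (\<lambda>t. Ck_on 1 {a..b} (f t)) F"
    and lim: "uniform_limit {a..b} f g F"
    and lim': "uniform_limit {a..b} (\<lambda>t. dX a b (f t)) G F"
  shows C1_uniform_limit: "Ck_on 1 {a..b} g"
    and dX_uniform_limit: "x \<in> {a..b} \<Longrightarrow> dX a b g x = G x"
proof -
  obtain N where N: "\<And>n. n \<ge> N \<Longrightarrow> Ck_on 1 {a..b} (f (s n))"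
    using eventually_compose_filterlim[OF C1 s] unfolding eventually_sequentially by blast
  have s': "filterlim (\<lambda>n. s (n + N)) F sequentially"
    by (rule filterlim_compose[OF s filterlim_add_const_nat_at_top])
  note seq = ab N[OF le_add2] filterlim_compose[OF lim s'] filterlim_compose[OF lim' s']
  show "Ck_on 1 {a..b} g"
    by (rule C1_uniform_limit_sequentially[OF seq])
  show "x \<in> {a..b} \<Longrightarrow> dX a b g x = G x"
    by (rule dX_uniform_limit_sequentially[OF seq])
qed

lemma C1norm_diff_tendsto_0:
  assumes ab: "a < b"
    and C1: "eventually (\<lambda>t. Ck_on 1 {a..b} (f t)) F" "Ck_on 1 {a..b} g"
    and lim: "uniform_limit {a..b} f g F"
    and lim': "uniform_limit {a..b} (\<lambda>t. dX a b (f t)) (dX a b g) F"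
  shows "((\<lambda>t. C1norm a b (\<lambda>x. f t x - g x)) \<longlongrightarrow> 0) F"
proof (rule tendstoI)
  fix e :: real assume e: "e > 0"
  then have e3: "e/3 > 0"
    by simp
  show "\<forall>\<^sub>F t in F. dist (C1norm a b (\<lambda>x. f t x - g x)) 0 < e"
    using uniform_limitD[OF lim e3] uniform_limitD[OF lim' e3] C1(1)
  proof eventually_elim
    case (elim t)
    have "C1norm a b (\<lambda>x. f t x - g x) \<le> e/3 + e/3"
    proof (rule C1norm_le)
      fix x assume x: "x \<in> {a..b}"
      show "\<bar>f t x - g x\<bar> \<le> e/3" "\<bar>dX a b (\<lambda>x. f t x - g x) x\<bar> \<le> e/3"
        using bspec[OF elim(1) x] bspec[OF elim(2) x] dX_diff[OF ab elim(3) C1(2) x]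
        by (simp_all add: dist_real_def)
    qed (use ab in simp)
    moreover have "0 \<le> C1norm a b (\<lambda>x. f t x - g x)"
      using ab by (intro C1norm_nonneg C1_diff elim C1) auto
    ultimately show ?case
      using e by simp
  qed
qed

lemma
  fixes f :: "nat \<Rightarrow> real \<Rightarrow> real"
  assumes ab: "a < b" and C1: "\<And>n. Ck_on 1 {a..b} (f n)"
    and bound: "\<And>n x. x \<in> {a..b} \<Longrightarrow> \<bar>f n x\<bar> \<le> M n"
    and bound': "\<And>n x. x \<in> {a..b} \<Longrightarrow> \<bar>dX a b (f n) x\<bar> \<le> M n"
    and M: "summable M"
  shows C1_suminf: "Ck_on 1 {a..b} (\<lambda>x. \<Sum>n. f n x)"
    and dX_suminf: "x \<in> {a..b} \<Longrightarrow> dX a b (\<lambda>x. \<Sum>n. f n x) x = (\<Sum>n. dX a b (f n) x)"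
    and C1norm_suminf_tendsto:
      "((\<lambda>m. C1norm a b (\<lambda>x. (\<Sum>n<m. f n x) - (\<Sum>n. f n x))) \<longlongrightarrow> 0) sequentially"
proof -
  have lim: "uniform_limit {a..b} (\<lambda>m x. \<Sum>n<m. f n x) (\<lambda>x. \<Sum>n. f n x) sequentially"
    using bound M by (intro Weierstrass_m_test) auto
  have "uniform_limit {a..b} (\<lambda>m x. \<Sum>n<m. dX a b (f n) x) (\<lambda>x. \<Sum>n. dX a b (f n) x) sequentially"
    using bound' M by (intro Weierstrass_m_test) auto
  then have lim': "uniform_limit {a..b} (\<lambda>m. dX a b (\<lambda>x. \<Sum>n<m. f n x)) (\<lambda>x. \<Sum>n. dX a b (f n) x) sequentially"
    by (rule uniform_limit_cong[THEN iffD1, rotated -1]) (auto simp: dX_sum[OF ab _ C1])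
  have C1m: "eventually (\<lambda>m. Ck_on 1 {a..b} (\<lambda>x. \<Sum>n<m. f n x)) sequentially"
    by (intro always_eventually allI C1_sum[OF ab] C1) simp
  note dX = dX_uniform_limit_sequentially[OF ab C1_sum[OF ab finite_lessThan C1] lim lim']
  show C1: "Ck_on 1 {a..b} (\<lambda>x. \<Sum>n. f n x)"
    by (rule C1_uniform_limit_sequentially[OF ab C1_sum[OF ab finite_lessThan C1] lim lim'])
  show "x \<in> {a..b} \<Longrightarrow> dX a b (\<lambda>x. \<Sum>n. f n x) x = (\<Sum>n. dX a b (f n) x)"
    by (rule dX)
  have "uniform_limit {a..b} (\<lambda>m. dX a b (\<lambda>x. \<Sum>n<m. f n x)) (dX a b (\<lambda>x. \<Sum>n. f n x)) sequentially"
    using lim' by (rule uniform_limit_cong[THEN iffD1, rotated -1]) (auto simp: dX)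
  then show "((\<lambda>m. C1norm a b (\<lambda>x. (\<Sum>n<m. f n x) - (\<Sum>n. f n x))) \<longlongrightarrow> 0) sequentially"
    by (rule C1norm_diff_tendsto_0[OF ab C1m C1 lim])
qed

section \<open>Means\<close>

(* A C^1 function is only constrained on {a..b} and may be non-measurable outside, so the mean
  integrates its cut-off. *)
definition cutoff :: "real \<Rightarrow> real \<Rightarrow> (real \<Rightarrow> real) \<Rightarrow> real \<Rightarrow> real" where
  "cutoff a b f x = (if x \<in> {a..b} then f x else 0)"

definition mean :: "real \<Rightarrow> real \<Rightarrow> (real \<Rightarrow> real) \<Rightarrow> real" where
  "mean a b f = integral\<^sup>L (mX a b) (cutoff a b f)"

lemma cutoff_cutoff [simp]: "cutoff a b (cutoff a b f) = cutoff a b f"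
  by (auto simp: cutoff_def)

lemma cutoff_eq [simp]: "x \<in> {a..b} \<Longrightarrow> cutoff a b f x = f x"
  by (simp add: cutoff_def)

lemma prob_space_mX: "a < b \<Longrightarrow> prob_space (mX a b)"
  unfolding mX_def by (intro prob_space_uniform_measure) auto

lemma AE_mX_in_interval: "a < b \<Longrightarrow> AE x in mX a b. x \<in> {a..b}"
  unfolding mX_def by (intro AE_uniform_measureI) auto

lemma borel_measurable_cutoff:
  assumes "continuous_on {a..b} f"
  shows "cutoff a b f \<in> borel_measurable (mX a b)"
proof -
  have "(\<lambda>x. indicator {a..b} x *\<^sub>R f x) \<in> borel_measurable borel"
    using assms by (intro borel_measurable_continuous_on_indicator) auto
  moreover have "(\<lambda>x. indicator {a..b} x *\<^sub>R f x) = cutoff a b f"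
    by (auto simp: cutoff_def indicator_def)
  ultimately show ?thesis
    by (simp add: mX_def)
qed

lemma integrable_cutoff:
  assumes "a < b" "continuous_on {a..b} f"
  shows "integrable (mX a b) (cutoff a b f)"
proof -
  interpret prob_space "mX a b"
    by (rule prob_space_mX[OF assms(1)])
  obtain B where B: "\<And>x. x \<in> f ` {a..b} \<Longrightarrow> norm x \<le> B" "B > 0"
    using compact_imp_bounded[OF compact_continuous_image[OF assms(2) compact_Icc]]
    unfolding bounded_pos by blast
  have "norm (cutoff a b f x) \<le> B" for x
    using B by (cases "x \<in> {a..b}") (simp_all add: cutoff_def)
  then have "AE x in mX a b. norm (cutoff a b f x) \<le> B"
    by simp
  then show ?thesis
    using borel_measurable_cutoff[OF assms(2)] by (rule integrable_const_bound)
qed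

lemma mean_eq_integral:
  assumes "a < b" "integrable (mX a b) f" "continuous_on {a..b} f"
  shows "mean a b f = integral\<^sup>L (mX a b) f"
  unfolding mean_def
  using AE_mX_in_interval[OF assms(1)] borel_measurable_cutoff[OF assms(3)]
    borel_measurable_integrable[OF assms(2)]
  by (intro integral_cong_AE) (auto elim: eventually_mono)

lemma mean_cong: "(\<And>x. x \<in> {a..b} \<Longrightarrow> f x = g x) \<Longrightarrow> mean a b f = mean a b g"
  unfolding mean_def cutoff_def by (metis (no_types, lifting))

lemma mean_linear:
  assumes "a < b" "continuous_on {a..b} f" "continuous_on {a..b} g"
  shows "mean a b (\<lambda>x. c * f x + d * g x) = c * mean a b f + d * mean a b g"
proof -
  have "cutoff a b (\<lambda>x. c * f x + d * g x) = (\<lambda>x. c * cutoff a b f x + d * cutoff a b g x)"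
    by (auto simp: cutoff_def)
  then show ?thesis
    unfolding mean_def using integrable_cutoff[OF assms(1,2)] integrable_cutoff[OF assms(1,3)] by simp
qed

lemma mean_diff:
  assumes "a < b" "continuous_on {a..b} f" "continuous_on {a..b} g"
  shows "mean a b (\<lambda>x. f x - g x) = mean a b f - mean a b g"
  using mean_linear[OF assms, of 1 "-1"] by simp

lemma mean_sum:
  assumes "a < b" "finite A" "\<And>i. i \<in> A \<Longrightarrow> continuous_on {a..b} (f i)"
  shows "mean a b (\<lambda>x. \<Sum>i\<in>A. f i x) = (\<Sum>i\<in>A. mean a b (f i))"
proof -
  have "cutoff a b (\<lambda>x. \<Sum>i\<in>A. f i x) = (\<lambda>x. \<Sum>i\<in>A. cutoff a b (f i) x)"
    by (rule ext) (simp add: cutoff_def del: atLeastAtMost_iff)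
  then show ?thesis
    unfolding mean_def using integrable_cutoff[OF assms(1,3)] by simp
qed

lemma abs_mean_le:
  assumes "a < b" "continuous_on {a..b} f" "\<And>x. x \<in> {a..b} \<Longrightarrow> \<bar>f x\<bar> \<le> B"
  shows "\<bar>mean a b f\<bar> \<le> B"
proof -
  interpret prob_space "mX a b"
    by (rule prob_space_mX[OF assms(1)])
  have B: "0 \<le> B"
    using assms(1) assms(3)[of a] by force
  have "\<bar>mean a b f\<bar> \<le> integral\<^sup>L (mX a b) (\<lambda>x. \<bar>cutoff a b f x\<bar>)"
    unfolding mean_def by (rule integral_abs_bound)
  also have "\<dots> \<le> integral\<^sup>L (mX a b) (\<lambda>x. B)"
    using integrable_abs[OF integrable_cutoff[OF assms(1,2)]] B
    by (intro integral_mono) (auto simp: cutoff_def assms(3))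
  also have "\<dots> = B"
    by (simp add: prob_space)
  finally show ?thesis .
qed

lemma abs_mean_le_C1norm: "a < b \<Longrightarrow> Ck_on 1 {a..b} f \<Longrightarrow> \<bar>mean a b f\<bar> \<le> C1norm a b f"
  by (intro abs_mean_le C1_imp_continuous_on abs_le_C1norm)

lemma mean_tendsto_of_C1norm:
  assumes ab: "a < b" and C1: "eventually (\<lambda>t. Ck_on 1 {a..b} (f t)) F" "Ck_on 1 {a..b} g"
    and lim: "((\<lambda>t. C1norm a b (\<lambda>x. f t x - g x)) \<longlongrightarrow> 0) F"
  shows "((\<lambda>t. mean a b (f t)) \<longlongrightarrow> mean a b g) F"
proof -
  have "eventually (\<lambda>t. norm (mean a b (f t) - mean a b g) \<le> C1norm a b (\<lambda>x. f t x - g x)) F"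
    using C1(1)
  proof eventually_elim
    case (elim t)
    then show ?case
      using abs_mean_le_C1norm[OF ab C1_diff[OF ab elim C1(2)]]
        mean_diff[OF ab C1_imp_continuous_on[OF elim] C1_imp_continuous_on[OF C1(2)]]
      by simp
  qed
  then have "((\<lambda>t. mean a b (f t) - mean a b g) \<longlongrightarrow> 0) F"
    by (rule Lim_null_comparison[OF _ lim])
  then show ?thesis
    by (simp add: LIM_zero_iff)
qed

lemma AE_mX_eq_imp_eq:
  fixes f g :: "real \<Rightarrow> real"
  assumes ab: "a < b" and cont: "continuous_on {a..b} f" "continuous_on {a..b} g"
    and ae: "AE x in mX a b. f x = g x" and x0: "x0 \<in> {a..b}"
  shows "f x0 = g x0"
proof (rule ccontr)
  assume ne: "f x0 \<noteq> g x0"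
  have "continuous_on {a..b} (\<lambda>x. f x - g x)"
    using cont by (intro continuous_intros)
  then obtain d where d: "d > 0" "\<And>y. y \<in> {a..b} \<Longrightarrow> dist y x0 < d \<Longrightarrow>
      dist (f y - g y) (f x0 - g x0) < \<bar>f x0 - g x0\<bar>"
    using x0 ne unfolding continuous_on_iff by (metis zero_less_abs_iff right_minus_eq)
  define p q where "p = max a (x0 - d/2)" and "q = min b (x0 + d/2)"
  have pq: "p < q" "{p..q} \<subseteq> {a..b}"
    using d(1) x0 ab by (auto simp: p_def q_def)
  have "f y \<noteq> g y" if "y \<in> {p..q}" for y
    using d(2)[of y] that pq(2) d(1) by (force simp: p_def q_def dist_real_def)
  then have "AE x in lborel. x \<notin> {p..q}"
    using ae ab pq(2) unfolding mX_def
    by (subst (asm) AE_uniform_measure) (auto elim!: eventually_mono)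
  then have "emeasure lborel {p..q} = 0"
    by (subst (asm) AE_iff_measurable[where N="{p..q}"]) auto
  then show False
    using pq(1) by simp
qed

section \<open>Tannery's theorem and difference quotients\<close>

lemma uniform_limit_suminf_tannery:
  fixes f :: "nat \<Rightarrow> 'i \<Rightarrow> 'a \<Rightarrow> real"
  assumes lim: "\<And>n. uniform_limit K (f n) (g n) F"
    and bound: "eventually (\<lambda>t. \<forall>n. \<forall>x\<in>K. \<bar>f n t x\<bar> \<le> M n) F"
    and bound': "\<And>n x. x \<in> K \<Longrightarrow> \<bar>g n x\<bar> \<le> M n"
    and M: "summable M"
  shows "uniform_limit K (\<lambda>t x. \<Sum>n. f n t x) (\<lambda>x. \<Sum>n. g n x) F"
proof (rule uniform_limitI)
  fix e :: real assume e: "e > 0"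
  obtain N where N: "norm (\<Sum>i. M (i + N)) < e/3"
    using suminf_exist_split[of "e/3" M] e M by auto
  have e': "e / (3 * (real N + 1)) > 0"
    using e by simp
  have "eventually (\<lambda>t. \<forall>n\<in>{..<N}. \<forall>x\<in>K. dist (f n t x) (g n x) < e / (3 * (real N + 1))) F"
    using uniform_limitD[OF lim e'] by (intro eventually_ball_finite) auto
  with bound show "\<forall>\<^sub>F t in F. \<forall>x\<in>K. dist (\<Sum>n. f n t x) (\<Sum>n. g n x) < e"
  proof eventually_elim
    case (elim t)
    show ?case
    proof
      fix x assume x: "x \<in> K"
      have sM: "summable (\<lambda>i. M (i + N))"
        using M by (rule summable_ignore_initial_segment)
      have sf: "summable (\<lambda>n. f n t x)" and sg: "summable (\<lambda>n. g n x)"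
        using elim(1) bound' x by (auto intro: summable_comparison_test'[OF M])
      have "\<bar>(\<Sum>n. f n t x) - (\<Sum>n. g n x)\<bar> =
          \<bar>(\<Sum>n<N. f n t x - g n x) + (\<Sum>i. f (i + N) t x) - (\<Sum>i. g (i + N) x)\<bar>"
        by (simp add: suminf_split_initial_segment[OF sf, of N] suminf_split_initial_segment[OF sg, of N]
            sum_subtractf)
      also have "\<dots> \<le> (\<Sum>n<N. \<bar>f n t x - g n x\<bar>) + (\<Sum>i. M (i + N)) + (\<Sum>i. M (i + N))"
      proof -
        have "\<bar>\<Sum>i. f (i + N) t x\<bar> \<le> (\<Sum>i. M (i + N))"
          using norm_suminf_le[of "\<lambda>i. f (i + N) t x" "\<lambda>i. M (i + N)"] elim(1) x sM by auto
        moreover have "\<bar>\<Sum>i. g (i + N) x\<bar> \<le> (\<Sum>i. M (i + N))"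
          using norm_suminf_le[of "\<lambda>i. g (i + N) x" "\<lambda>i. M (i + N)"] bound' x sM by auto
        moreover have "\<bar>\<Sum>n<N. f n t x - g n x\<bar> \<le> (\<Sum>n<N. \<bar>f n t x - g n x\<bar>)"
          by (rule sum_abs)
        ultimately show ?thesis
          by linarith
      qed
      also have "(\<Sum>n<N. \<bar>f n t x - g n x\<bar>) \<le> (\<Sum>n<N. e / (3 * (real N + 1)))"
      proof (rule sum_mono)
        fix n assume "n \<in> {..<N}"
        then show "\<bar>f n t x - g n x\<bar> \<le> e / (3 * (real N + 1))"
          using bspec[OF bspec[OF elim(2) \<open>n \<in> {..<N}\<close>] x] by (simp add: dist_real_def)
      qed
      also have "\<dots> < e/3"
        using e by (simp add: field_simps)
      finally show "dist (\<Sum>n. f n t x) (\<Sum>n. g n x) < e"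
        using N by (simp add: dist_real_def)
    qed
  qed
qed

lemma uniform_limit_at_of_continuous_on_Times:
  fixes F :: "real \<Rightarrow> 'a::metric_space \<Rightarrow> real"
  assumes V: "open V" "s \<in> V" and K: "compact K"
    and cont: "continuous_on (V \<times> K) (\<lambda>(e, x). F e x)"
  shows "uniform_limit K F (F s) (at s)"
proof (rule uniform_limitI)
  fix \<epsilon> :: real assume "\<epsilon> > 0"
  obtain r where r: "r > 0" "cball s r \<subseteq> V"
    using V open_contains_cball by blast
  have "uniformly_continuous_on (cball s r \<times> K) (\<lambda>(e, x). F e x)"
    using continuous_on_subset[OF cont Sigma_mono[OF r(2) order_refl]] K
    by (intro compact_uniformly_continuous compact_Times) auto
  then obtain d where d: "d > 0" "\<And>p q. p \<in> cball s r \<times> K \<Longrightarrow> q \<in> cball s r \<times> K \<Longrightarrow>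
      dist q p < d \<Longrightarrow> dist ((\<lambda>(e, x). F e x) q) ((\<lambda>(e, x). F e x) p) < \<epsilon>"
    unfolding uniformly_continuous_on_def using \<open>\<epsilon> > 0\<close> by metis
  have "eventually (\<lambda>e. e \<in> ball s (min r d)) (at s)"
    using eventually_at_ball[of "min r d" s UNIV] r(1) d(1) by (auto elim: eventually_mono)
  then show "\<forall>\<^sub>F e in at s. \<forall>x\<in>K. dist (F e x) (F s x) < \<epsilon>"
  proof eventually_elim
    case (elim e)
    show ?case
    proof
      fix x assume "x \<in> K"
      then show "dist (F e x) (F s x) < \<epsilon>"
        using d(2)[of "(s, x)" "(e, x)"] elim r(1) by (simp add: dist_Pair_Pair dist_commute)
    qed
  qed
qed

lemma uniform_limit_difference_quotient:
  fixes F F' :: "real \<Rightarrow> 'a::metric_space \<Rightarrow> real"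
  assumes V: "open V" "0 \<in> V" and K: "compact K"
    and deriv: "\<And>s x. s \<in> V \<Longrightarrow> x \<in> K \<Longrightarrow> ((\<lambda>e. F e x) has_real_derivative F' s x) (at s)"
    and cont: "continuous_on (V \<times> K) (\<lambda>(e, x). F' e x)"
  shows "uniform_limit K (\<lambda>e x. (F e x - F 0 x) / e) (F' 0) (at 0)"
proof (rule uniform_limitI)
  fix \<epsilon> :: real assume "\<epsilon> > 0"
  then have "\<epsilon>/2 > 0"
    by simp
  from uniform_limitD[OF uniform_limit_at_of_continuous_on_Times[OF V K cont] this]
  obtain d where d: "d > 0" "\<And>s x. s \<noteq> 0 \<Longrightarrow> dist s 0 < d \<Longrightarrow> x \<in> K \<Longrightarrow> dist (F' s x) (F' 0 x) < \<epsilon>/2"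
    unfolding eventually_at by blast
  obtain r where r: "r > 0" "ball 0 r \<subseteq> V"
    using V open_contains_ball by blast
  define \<rho> where "\<rho> = min d r"
  have "eventually (\<lambda>e. e \<in> ball 0 \<rho> \<and> e \<noteq> 0) (at 0)"
    using eventually_at_ball'[of \<rho> 0 UNIV] d(1) r(1) by (auto simp: \<rho>_def elim: eventually_mono)
  then show "\<forall>\<^sub>F e in at 0. \<forall>x\<in>K. dist ((F e x - F 0 x) / e) (F' 0 x) < \<epsilon>"
  proof eventually_elim
    case (elim e)
    show ?case
    proof
      fix x assume x: "x \<in> K"
      have "\<bar>F e x - F 0 x - (e - 0) *\<^sub>R F' 0 x\<bar> \<le> \<bar>e - 0\<bar> * (\<epsilon>/2)"
      proof (rule vector_differentiable_bound_linearization[of "ball 0 \<rho>" "\<lambda>s. F s x" "\<lambda>s. F' s x"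
            0 e 0 "\<epsilon>/2", unfolded real_norm_def])
        fix s :: real assume s: "s \<in> ball 0 \<rho>"
        then have "s \<in> V"
          using r(2) by (auto simp: \<rho>_def)
        then show "((\<lambda>s. F s x) has_vector_derivative F' s x) (at s within ball 0 \<rho>)"
          using deriv[OF _ x] by (auto simp: has_real_derivative_iff_has_vector_derivative[symmetric]
              intro: has_field_derivative_at_within)
        show "\<bar>F' s x - F' 0 x\<bar> \<le> \<epsilon>/2"
          using d(2)[of s x] s x \<open>\<epsilon> > 0\<close> by (cases "s = 0") (auto simp: \<rho>_def dist_real_def)
      next
        show "closed_segment 0 e \<subseteq> ball 0 \<rho>"
          using elim d(1) r(1) by (intro closed_segment_subset) (auto simp: \<rho>_def)
      qed (use d(1) r(1) in \<open>auto simp: \<rho>_def\<close>)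
      then have "\<bar>(F e x - F 0 x) / e - F' 0 x\<bar> \<le> \<epsilon>/2"
        using elim by (simp add: field_simps abs_divide)
      then show "dist ((F e x - F 0 x) / e) (F' 0 x) < \<epsilon>"
        using \<open>\<epsilon> > 0\<close> by (simp add: dist_real_def)
    qed
  qed
qed

lemma uniform_limit_suminf_at:
  fixes F :: "nat \<Rightarrow> real \<Rightarrow> 'a::metric_space \<Rightarrow> real"
  assumes V: "open V" "0 \<in> V" and K: "compact K"
    and cont: "\<And>n. continuous_on (V \<times> K) (\<lambda>(e, x). F n e x)"
    and bound: "\<And>n e x. e \<in> V \<Longrightarrow> x \<in> K \<Longrightarrow> \<bar>F n e x\<bar> \<le> M n" and M: "summable M"
  shows "uniform_limit K (\<lambda>e x. \<Sum>n. F n e x) (\<lambda>x. \<Sum>n. F n 0 x) (at 0)"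
proof (rule uniform_limit_suminf_tannery[OF uniform_limit_at_of_continuous_on_Times[OF V K cont] _ _ M])
  show "\<forall>\<^sub>F e in at 0. \<forall>n. \<forall>x\<in>K. \<bar>F n e x\<bar> \<le> M n"
    using eventually_at_in_open'[OF V] by eventually_elim (use bound in auto)
qed (use bound V in auto)

lemma uniform_limit_suminf_difference_quotient:
  fixes F F' :: "nat \<Rightarrow> real \<Rightarrow> 'a::metric_space \<Rightarrow> real"
  assumes V: "open V" "0 \<in> V" and K: "compact K"
    and deriv: "\<And>n s x. s \<in> V \<Longrightarrow> x \<in> K \<Longrightarrow> ((\<lambda>e. F n e x) has_real_derivative F' n s x) (at s)"
    and cont: "\<And>n. continuous_on (V \<times> K) (\<lambda>(e, x). F' n e x)"
    and bound: "\<And>n s x. s \<in> V \<Longrightarrow> x \<in> K \<Longrightarrow> \<bar>F' n s x\<bar> \<le> M n" and M: "summable M"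
  shows "uniform_limit K (\<lambda>e x. \<Sum>n. (F n e x - F n 0 x) / e) (\<lambda>x. \<Sum>n. F' n 0 x) (at 0)"
proof (rule uniform_limit_suminf_tannery[OF uniform_limit_difference_quotient[OF V K deriv cont] _ _ M])
  obtain r where r: "r > 0" "cball 0 r \<subseteq> V"
    using V open_contains_cball by blast
  have "\<bar>(F n e x - F n 0 x) / e\<bar> \<le> M n" if "\<bar>e\<bar> < r" "x \<in> K" for n e x
  proof -
    have "\<bar>F n e x - F n 0 x\<bar> \<le> M n * \<bar>e - 0\<bar>"
    proof (rule field_differentiable_bound[OF convex_cball, of 0 r "\<lambda>e. F n e x" "\<lambda>s. F' n s x",
          unfolded real_norm_def])
      fix s :: real assume "s \<in> cball 0 r"
      then have "s \<in> V"
        using r(2) by blast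
      then show "((\<lambda>e. F n e x) has_field_derivative F' n s x) (at s within cball 0 r)"
        and "\<bar>F' n s x\<bar> \<le> M n"
        using deriv bound that(2) by (auto intro: has_field_derivative_at_within)
    qed (use that r in auto)
    then show ?thesis
      using bound[OF V(2) that(2), of n] by (cases "e = 0") (auto simp: abs_divide field_simps)
  qed
  moreover have "eventually (\<lambda>e. \<bar>e\<bar> < r) (at 0)"
    using eventually_at_ball[of r 0 UNIV] r(1) by (auto elim: eventually_mono)
  ultimately show "\<forall>\<^sub>F e in at 0. \<forall>n. \<forall>x\<in>K. \<bar>(F n e x - F n 0 x) / e\<bar> \<le> M n"
    by (auto elim: eventually_mono)
qed (use bound V in auto)

definition zero_ext :: "nat set \<Rightarrow> (nat \<Rightarrow> 'e \<Rightarrow> 'x \<Rightarrow> real) \<Rightarrow> nat \<Rightarrow> 'e \<Rightarrow> 'x \<Rightarrow> real" where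
  "zero_ext Z F n e x = (if n \<in> Z then F n e x else 0)"

lemma continuous_on_zero_ext:
  "(n \<in> Z \<Longrightarrow> continuous_on S (\<lambda>(e, x). F n e x)) \<Longrightarrow> continuous_on S (\<lambda>(e, x). zero_ext Z F n e x)"
  by (cases "n \<in> Z") (simp_all add: zero_ext_def)

lemma has_real_derivative_zero_ext:
  "(n \<in> Z \<Longrightarrow> ((\<lambda>e. F n e x) has_real_derivative F' n s x) (at s)) \<Longrightarrow>
    ((\<lambda>e. zero_ext Z F n e x) has_real_derivative zero_ext Z F' n s x) (at s)"
  by (cases "n \<in> Z") (simp_all add: zero_ext_def)

lemma infsum_nat_eq_suminf:
  fixes f :: "nat \<Rightarrow> real" and Z :: "nat set"
  defines "f0 \<equiv> \<lambda>n. if n \<in> Z then f n else 0"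
  shows "(\<Sum>\<^sub>\<infinity>n\<in>Z. f n) = (if summable (\<lambda>n. \<bar>f0 n\<bar>) then (\<Sum>n. f0 n) else 0)"
proof -
  have has_sum_iff: "(f has_sum s) Z \<longleftrightarrow> (f0 has_sum s) UNIV" for s
    unfolding f0_def by (rule has_sum_cong_neutral) simp_all
  have "f summable_on Z \<longleftrightarrow> f0 summable_on UNIV"
    using has_sum_iff unfolding summable_on_def by blast
  also have "\<dots> \<longleftrightarrow> (\<lambda>n. \<bar>f0 n\<bar>) summable_on UNIV"
    using summable_on_iff_abs_summable_on_real[of f0 UNIV] by simp
  also have "\<dots> \<longleftrightarrow> summable (\<lambda>n. \<bar>f0 n\<bar>)"
    by (rule summable_on_UNIV_nonneg_real_iff) simp
  finally have summable_iff: "f summable_on Z \<longleftrightarrow> summable (\<lambda>n. \<bar>f0 n\<bar>)" .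
  show ?thesis
  proof (cases "summable (\<lambda>n. \<bar>f0 n\<bar>)")
    case True
    then have "(f0 has_sum (\<Sum>n. f0 n)) UNIV"
      using summable_sums[OF summable_rabs_cancel[OF True]] by (intro norm_summable_imp_has_sum) simp_all
    then have "(\<Sum>\<^sub>\<infinity>n\<in>Z. f n) = (\<Sum>n. f0 n)"
      unfolding has_sum_iff[symmetric] by (rule infsumI)
    with True show ?thesis
      by simp
  next
    case False
    then show ?thesis
      using summable_iff infsum_not_exists by metis
  qed
qed

lemma summable_bound_of_sum_sup:
  assumes "sum_sup Z V S F < \<top>"
  obtains M where "summable M" "\<And>n e x. e \<in> V \<Longrightarrow> x \<in> S \<Longrightarrow> \<bar>zero_ext Z F n e x\<bar> \<le> M n"
proof -
  define G where "G n = (if n \<in> Z then (SUP e\<in>V. SUP x\<in>S. ennreal \<bar>F n e x\<bar>) else 0)" for n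
  have "sum_sup Z V S F = (\<Sum>\<^sub>\<infinity>n\<in>UNIV. G n)"
    unfolding sum_sup_def G_def by (intro infsum_cong_neutral) auto
  also have "\<dots> = (\<Sum>n. G n)"
    by (rule sums_unique[OF has_sum_imp_sums[OF has_sum_infsum]]) (simp add: nonneg_summable_on_complete)
  finally have fin: "(\<Sum>n. G n) < \<top>"
    using assms by simp
  have G_fin: "G n < \<top>" for n
  proof -
    have "sum G {n} \<le> (\<Sum>n. G n)"
      by (rule sum_le_suminf) auto
    then show ?thesis
      using fin by simp
  qed
  define M where "M n = enn2real (G n)" for n
  have GM: "G n = ennreal (M n)" for n
    using G_fin[of n] by (simp add: M_def less_top)
  have M_nonneg: "0 \<le> M n" for n
    by (simp add: M_def)
  show ?thesis
  proof
    have "(\<Sum>n. ennreal (M n)) \<noteq> \<top>"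
      using fin by (simp add: GM[symmetric])
    then show "summable M"
      by (intro summable_suminf_not_top) (simp_all add: M_def)
    fix n e x assume "e \<in> V" "x \<in> S"
    then have "ennreal \<bar>zero_ext Z F n e x\<bar> \<le> G n"
      unfolding G_def zero_ext_def by (simp add: SUP_upper2)
    then show "\<bar>zero_ext Z F n e x\<bar> \<le> M n"
      using M_nonneg[of n] by (simp add: GM)
  qed
qed

lemma AE_summable_of_summable_integral:
  fixes f :: "nat \<Rightarrow> 'a \<Rightarrow> real"
  assumes int: "\<And>i. integrable M (f i)" and sum: "summable (\<lambda>i. \<integral>x. \<bar>f i x\<bar> \<partial>M)"
  shows "AE x in M. summable (\<lambda>i. \<bar>f i x\<bar>)"
proof -
  have [measurable]: "f i \<in> borel_measurable M" for i
    using int by auto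
  have "(\<integral>\<^sup>+x. (\<Sum>i. ennreal \<bar>f i x\<bar>) \<partial>M) = (\<Sum>i. \<integral>\<^sup>+x. ennreal \<bar>f i x\<bar> \<partial>M)"
    by (rule nn_integral_suminf) measurable
  also have "\<dots> = (\<Sum>i. ennreal (\<integral>x. \<bar>f i x\<bar> \<partial>M))"
    using nn_integral_eq_integral[OF integrable_abs[OF int]] by simp
  also have "\<dots> = ennreal (\<Sum>i. \<integral>x. \<bar>f i x\<bar> \<partial>M)"
    using sum by (intro suminf_ennreal2) auto
  finally have "(\<integral>\<^sup>+x. (\<Sum>i. ennreal \<bar>f i x\<bar>) \<partial>M) \<noteq> \<infinity>"
    by simp
  then have "AE x in M. (\<Sum>i. ennreal \<bar>f i x\<bar>) \<noteq> \<infinity>"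
    by (intro nn_integral_noteq_infinite) measurable
  then show ?thesis
    by eventually_elim (auto intro: summable_suminf_not_top)
qed

section \<open>Operators with a spectral gap on \<open>C\<^sup>1\<close>\<close>

locale C1_operator =
  fixes a b :: real and L :: "(real \<Rightarrow> real) \<Rightarrow> real \<Rightarrow> real"
  assumes a_less_b: "a < b"
    and C1_apply: "Ck_on 1 {a..b} \<phi> \<Longrightarrow> Ck_on 1 {a..b} (L \<phi>)"
    and apply_cong: "(\<And>y. y \<in> {a..b} \<Longrightarrow> \<phi> y = \<psi> y) \<Longrightarrow> x \<in> {a..b} \<Longrightarrow> L \<phi> x = L \<psi> x"
    and apply_linear: "Ck_on 1 {a..b} \<phi> \<Longrightarrow> Ck_on 1 {a..b} \<psi> \<Longrightarrow> x \<in> {a..b} \<Longrightarrow>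
      L (\<lambda>y. c * \<phi> y + d * \<psi> y) x = c * L \<phi> x + d * L \<psi> x"
begin

lemma C1_pow: "Ck_on 1 {a..b} \<phi> \<Longrightarrow> Ck_on 1 {a..b} ((L ^^ n) \<phi>)"
  by (induction n) (simp_all add: C1_apply)

lemma pow_cong:
  "(\<And>y. y \<in> {a..b} \<Longrightarrow> \<phi> y = \<psi> y) \<Longrightarrow> x \<in> {a..b} \<Longrightarrow> (L ^^ n) \<phi> x = (L ^^ n) \<psi> x"
  by (induction n arbitrary: x) (auto intro: apply_cong)

lemma pow_linear:
  assumes "Ck_on 1 {a..b} \<phi>" "Ck_on 1 {a..b} \<psi>" "x \<in> {a..b}"
  shows "(L ^^ n) (\<lambda>y. c * \<phi> y + d * \<psi> y) x = c * (L ^^ n) \<phi> x + d * (L ^^ n) \<psi> x"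
  using assms(3)
proof (induction n arbitrary: x)
  case (Suc n)
  then have "(L ^^ Suc n) (\<lambda>y. c * \<phi> y + d * \<psi> y) x =
      L (\<lambda>y. c * (L ^^ n) \<phi> y + d * (L ^^ n) \<psi> y) x"
    by (auto intro: apply_cong)
  also have "\<dots> = c * (L ^^ Suc n) \<phi> x + d * (L ^^ Suc n) \<psi> x"
    using Suc.prems by (simp add: apply_linear C1_pow assms(1,2))
  finally show ?case .
qed simp

lemma apply_diff:
  "Ck_on 1 {a..b} \<phi> \<Longrightarrow> Ck_on 1 {a..b} \<psi> \<Longrightarrow> x \<in> {a..b} \<Longrightarrow> L (\<lambda>y. \<phi> y - \<psi> y) x = L \<phi> x - L \<psi> x"
  using apply_linear[of \<phi> \<psi> x 1 "-1"] by simp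

lemma apply_sum:
  assumes "finite A" "\<And>i. i \<in> A \<Longrightarrow> Ck_on 1 {a..b} (f i)" "x \<in> {a..b}"
  shows "L (\<lambda>y. \<Sum>i\<in>A. f i y) x = (\<Sum>i\<in>A. L (f i) x)"
  using assms(1,2)
proof (induction A rule: finite_induct)
  case empty
  show ?case
    using apply_linear[OF C1_const[OF a_less_b] C1_const[OF a_less_b] assms(3), of 0 0 0 0] by simp
next
  case (insert i A)
  then have "Ck_on 1 {a..b} (f i)" "Ck_on 1 {a..b} (\<lambda>y. \<Sum>i\<in>A. f i y)"
    by (auto intro: C1_sum[OF a_less_b])
  then have "L (\<lambda>y. 1 * f i y + 1 * (\<Sum>i\<in>A. f i y)) x = L (f i) x + L (\<lambda>y. \<Sum>i\<in>A. f i y) x"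
    using apply_linear[OF _ _ assms(3), of "f i" "\<lambda>y. \<Sum>i\<in>A. f i y" 1 1] by simp
  with insert show ?case
    by simp
qed

lemma pow_fixed_point:
  assumes "\<And>x. x \<in> {a..b} \<Longrightarrow> L h x = h x" "x \<in> {a..b}"
  shows "(L ^^ n) h x = h x"
  using assms(2)
proof (induction n arbitrary: x)
  case (Suc n)
  then have "(L ^^ Suc n) h x = L h x"
    by (auto intro: apply_cong)
  with Suc.prems assms(1) show ?case
    by simp
qed simp

(* The fixed point h carries the mean; the gap drives the zero-mean remainder to 0. *)
lemma mean_pow_tendsto_of_gap:
  assumes gap: "\<And>\<phi> n. Ck_on 1 {a..b} \<phi> \<Longrightarrow> mean a b \<phi> = 0 \<Longrightarrow>
      C1norm a b ((L ^^ n) \<phi>) \<le> C * \<theta> ^ n * C1norm a b \<phi>"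
    and \<theta>: "0 \<le> \<theta>" "\<theta> < 1"
    and h: "Ck_on 1 {a..b} h" "\<And>x. x \<in> {a..b} \<Longrightarrow> L h x = h x" "mean a b h = 1"
    and \<psi>: "Ck_on 1 {a..b} \<psi>"
  shows "(\<lambda>n. mean a b ((L ^^ n) \<psi>)) \<longlonglongrightarrow> mean a b \<psi>"
proof -
  note ab = a_less_b
  define k where "k = mean a b \<psi>"
  define \<psi>0 where "\<psi>0 y = 1 * \<psi> y + (- k) * h y" for y
  have C1_\<psi>0: "Ck_on 1 {a..b} \<psi>0"
    unfolding \<psi>0_def by (rule C1_linear[OF ab \<psi> h(1)])
  have "mean a b \<psi>0 = mean a b \<psi> - k"
    unfolding \<psi>0_def
    using mean_linear[OF ab C1_imp_continuous_on[OF \<psi>] C1_imp_continuous_on[OF h(1)], of 1 "-k"] h(3)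
    by simp
  then have mean_\<psi>0: "mean a b \<psi>0 = 0"
    by (simp add: k_def)
  have mean_eq: "mean a b ((L ^^ n) \<psi>) = mean a b ((L ^^ n) \<psi>0) + k" for n
  proof -
    have "(L ^^ n) \<psi> x = 1 * (L ^^ n) \<psi>0 x + k * h x" if "x \<in> {a..b}" for x
    proof -
      have "(L ^^ n) \<psi> x = (L ^^ n) (\<lambda>y. 1 * \<psi>0 y + k * h y) x"
        using that by (intro pow_cong) (simp add: \<psi>0_def)
      then show ?thesis
        using pow_linear[OF C1_\<psi>0 h(1) that, where c=1 and d=k] pow_fixed_point[OF h(2) that] by simp
    qed
    then have "mean a b ((L ^^ n) \<psi>) = mean a b (\<lambda>x. 1 * (L ^^ n) \<psi>0 x + k * h x)"
      by (rule mean_cong)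
    also have "\<dots> = 1 * mean a b ((L ^^ n) \<psi>0) + k * mean a b h"
      by (rule mean_linear[OF ab C1_imp_continuous_on[OF C1_pow[OF C1_\<psi>0]] C1_imp_continuous_on[OF h(1)]])
    finally show ?thesis
      using h(3) by simp
  qed
  have "\<forall>n. norm (mean a b ((L ^^ n) \<psi>0)) \<le> C * C1norm a b \<psi>0 * \<theta> ^ n"
    using order_trans[OF abs_mean_le_C1norm[OF ab C1_pow[OF C1_\<psi>0]] gap[OF C1_\<psi>0 mean_\<psi>0]]
    by (simp add: algebra_simps)
  moreover have "(\<lambda>n. C * C1norm a b \<psi>0 * \<theta> ^ n) \<longlonglongrightarrow> 0"
    using \<theta> by (intro tendsto_mult_right_zero LIMSEQ_power_zero) simp
  ultimately have "(\<lambda>n. mean a b ((L ^^ n) \<psi>0)) \<longlonglongrightarrow> 0"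
    by (rule Lim_null_comparison[OF always_eventually])
  from tendsto_add[OF this tendsto_const[of k]] show ?thesis
    unfolding mean_eq k_def by simp
qed

lemma mean_preserving_of_gap:
  assumes gap: "\<And>\<phi> n. Ck_on 1 {a..b} \<phi> \<Longrightarrow> mean a b \<phi> = 0 \<Longrightarrow>
      C1norm a b ((L ^^ n) \<phi>) \<le> C * \<theta> ^ n * C1norm a b \<phi>"
    and \<theta>: "0 \<le> \<theta>" "\<theta> < 1"
    and h: "Ck_on 1 {a..b} h" "\<And>x. x \<in> {a..b} \<Longrightarrow> L h x = h x" "mean a b h = 1"
    and \<phi>: "Ck_on 1 {a..b} \<phi>"
  shows "mean a b (L \<phi>) = mean a b \<phi>"
proof -
  have lim: "(\<lambda>n. mean a b ((L ^^ n) \<psi>)) \<longlonglongrightarrow> mean a b \<psi>" if "Ck_on 1 {a..b} \<psi>" for \<psi>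
    using gap \<theta> h that by (rule mean_pow_tendsto_of_gap)
  have "(\<lambda>n. mean a b ((L ^^ n) (L \<phi>))) \<longlonglongrightarrow> mean a b (L \<phi>)"
    by (rule lim[OF C1_apply[OF \<phi>]])
  moreover have "(\<lambda>n. mean a b ((L ^^ n) (L \<phi>))) \<longlonglongrightarrow> mean a b \<phi>"
    using LIMSEQ_Suc[OF lim[OF \<phi>]] by (simp add: funpow_Suc_right del: funpow.simps)
  ultimately show ?thesis
    by (rule LIMSEQ_unique)
qed

definition neumann :: "(real \<Rightarrow> real) \<Rightarrow> real \<Rightarrow> real" where
  "neumann D = cutoff a b (\<lambda>x. \<Sum>k. (L ^^ k) D x)"

end

locale C1_gap_operator = C1_operator +
  fixes C \<theta> :: real
  assumes gap_constants: "0 < \<theta>" "\<theta> < 1" "1 \<le> C"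
    and mean_preserving: "Ck_on 1 {a..b} \<phi> \<Longrightarrow> mean a b (L \<phi>) = mean a b \<phi>"
    and gap: "Ck_on 1 {a..b} \<phi> \<Longrightarrow> mean a b \<phi> = 0 \<Longrightarrow>
      C1norm a b ((L ^^ n) \<phi>) \<le> C * \<theta> ^ n * C1norm a b \<phi>"
begin

lemma mean_pow: "Ck_on 1 {a..b} \<phi> \<Longrightarrow> mean a b ((L ^^ n) \<phi>) = mean a b \<phi>"
  by (induction n) (simp_all add: mean_preserving C1_pow)

lemma C1norm_apply_le:
  assumes "Ck_on 1 {a..b} \<phi>" "mean a b \<phi> = 0"
  shows "C1norm a b (L \<phi>) \<le> C * C1norm a b \<phi>"
proof -
  have "C1norm a b (L \<phi>) \<le> C * \<theta> * C1norm a b \<phi>"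
    using gap[OF assms, of "Suc 0"] by simp
  also have "\<dots> \<le> C * C1norm a b \<phi>"
    using gap_constants C1norm_nonneg[OF assms(1)] a_less_b
    by (intro mult_right_mono mult_left_le) auto
  finally show ?thesis .
qed

(* Neumann series: f = L^m f + (SUM k<m. L^k (f - L f)), and the gap bounds every term. *)
lemma resolvent_bound:
  assumes f: "Ck_on 1 {a..b} f" "mean a b f = 0"
  shows "C1norm a b f \<le> C / (1 - \<theta>) * C1norm a b (\<lambda>x. f x - L f x)"
proof -
  note ab = a_less_b
  define r where "r = (\<lambda>x. f x - L f x)"
  have C1_r: "Ck_on 1 {a..b} r"
    unfolding r_def by (intro C1_diff[OF ab f(1) C1_apply[OF f(1)]])
  have mean_r: "mean a b r = 0"
    unfolding r_def using mean_diff[OF ab C1_imp_continuous_on[OF f(1)] C1_imp_continuous_on[OF C1_apply[OF f(1)]]]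
    by (simp add: mean_preserving f)
  have geometric: "(\<Sum>k<m. \<theta> ^ k) \<le> 1 / (1 - \<theta>)" for m
    using gap_constants by (simp add: sum_gp_strict field_simps)
  have "C1norm a b f \<le> C * \<theta> ^ m * C1norm a b f + C / (1 - \<theta>) * C1norm a b r" for m
  proof -
    have telescope: "f x = (L ^^ m) f x + (\<Sum>k<m. (L ^^ k) r x)" if "x \<in> {a..b}" for x
    proof -
      have "(L ^^ k) r x = (L ^^ k) f x - (L ^^ Suc k) f x" for k
        using pow_linear[OF f(1) C1_apply[OF f(1)] that, of k 1 "-1"]
        by (simp add: r_def funpow_Suc_right del: funpow.simps)
      then show ?thesis
        using sum_lessThan_telescope'[of "\<lambda>k. (L ^^ k) f x" m] by (simp del: funpow.simps)
    qed
    have "C1norm a b f = C1norm a b (\<lambda>x. (L ^^ m) f x + (\<Sum>k<m. (L ^^ k) r x))"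
      by (rule C1norm_cong) (rule telescope)
    also have "\<dots> \<le> C1norm a b ((L ^^ m) f) + C1norm a b (\<lambda>x. \<Sum>k<m. (L ^^ k) r x)"
      by (rule C1norm_add_le[OF ab C1_pow[OF f(1)] C1_sum[OF ab finite_lessThan C1_pow[OF C1_r]]])
    also have "\<dots> \<le> C1norm a b ((L ^^ m) f) + (\<Sum>k<m. C1norm a b ((L ^^ k) r))"
      using C1norm_sum_le[OF ab finite_lessThan C1_pow[OF C1_r]] by simp
    also have "\<dots> \<le> C * \<theta> ^ m * C1norm a b f + (\<Sum>k<m. C * \<theta> ^ k * C1norm a b r)"
      by (intro add_mono sum_mono gap f C1_r mean_r)
    also have "(\<Sum>k<m. C * \<theta> ^ k * C1norm a b r) = C * C1norm a b r * (\<Sum>k<m. \<theta> ^ k)"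
      by (simp add: sum_distrib_left mult_ac)
    also have "\<dots> \<le> C * C1norm a b r * (1 / (1 - \<theta>))"
      using gap_constants C1norm_nonneg[OF C1_r] ab by (intro mult_left_mono geometric) auto
    finally show ?thesis
      by (simp add: mult_ac)
  qed
  moreover have "(\<lambda>m. C * \<theta> ^ m * C1norm a b f + C / (1 - \<theta>) * C1norm a b r) \<longlonglongrightarrow>
      C * 0 * C1norm a b f + C / (1 - \<theta>) * C1norm a b r"
    using gap_constants by (intro tendsto_intros LIMSEQ_power_zero) simp
  ultimately show ?thesis
    unfolding r_def by (intro LIMSEQ_le_const) auto
qed

lemma
  assumes D: "Ck_on 1 {a..b} D" "mean a b D = 0"
  shows C1_suminf_pow: "Ck_on 1 {a..b} (\<lambda>x. \<Sum>k. (L ^^ k) D x)"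
    and summable_pow: "x \<in> {a..b} \<Longrightarrow> summable (\<lambda>k. (L ^^ k) D x)"
    and mean_partial_sums: "mean a b (\<lambda>x. \<Sum>k<m. (L ^^ k) D x) = 0"
    and partial_sums_tendsto:
      "(\<lambda>m. C1norm a b (\<lambda>x. (\<Sum>k<m. (L ^^ k) D x) - (\<Sum>k. (L ^^ k) D x))) \<longlonglongrightarrow> 0"
proof -
  note ab = a_less_b
  define M where "M k = C * C1norm a b D * \<theta> ^ k" for k
  have M: "summable M"
    unfolding M_def using gap_constants by (intro summable_mult summable_geometric) simp
  have C1norm_pow: "C1norm a b ((L ^^ k) D) \<le> M k" for k
    unfolding M_def using gap[OF D] by (simp add: mult_ac)
  have C1_pow: "Ck_on 1 {a..b} ((L ^^ k) D)" for k
    by (rule C1_pow[OF D(1)])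
  have bound: "\<bar>(L ^^ k) D y\<bar> \<le> M k" and bound': "\<bar>dX a b ((L ^^ k) D) y\<bar> \<le> M k"
    if "y \<in> {a..b}" for k y
    using order_trans[OF abs_le_C1norm[OF C1_pow that] C1norm_pow]
      order_trans[OF abs_dX_le_C1norm[OF C1_pow that] C1norm_pow] by auto
  show "Ck_on 1 {a..b} (\<lambda>x. \<Sum>k. (L ^^ k) D x)"
    by (rule C1_suminf[OF ab C1_pow bound bound' M])
  show "(\<lambda>m. C1norm a b (\<lambda>x. (\<Sum>k<m. (L ^^ k) D x) - (\<Sum>k. (L ^^ k) D x))) \<longlonglongrightarrow> 0"
    by (rule C1norm_suminf_tendsto[OF ab C1_pow bound bound' M])
  show "x \<in> {a..b} \<Longrightarrow> summable (\<lambda>k. (L ^^ k) D x)"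
    using bound by (intro summable_comparison_test'[OF M]) simp
  show "mean a b (\<lambda>x. \<Sum>k<m. (L ^^ k) D x) = 0"
    using mean_sum[OF ab finite_lessThan C1_imp_continuous_on[OF C1_pow]]
    by (simp add: mean_pow[OF D(1)] D(2))
qed

lemma mean_suminf_pow:
  assumes D: "Ck_on 1 {a..b} D" "mean a b D = 0"
  shows "mean a b (\<lambda>x. \<Sum>k. (L ^^ k) D x) = 0"
proof -
  have "(\<lambda>m. mean a b (\<lambda>x. \<Sum>k<m. (L ^^ k) D x)) \<longlonglongrightarrow> mean a b (\<lambda>x. \<Sum>k. (L ^^ k) D x)"
    using C1_sum[OF a_less_b finite_lessThan C1_pow[OF D(1)]]
    by (intro mean_tendsto_of_C1norm[OF a_less_b _ C1_suminf_pow[OF D] partial_sums_tendsto[OF D]]) simp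
  then show ?thesis
    by (simp add: mean_partial_sums[OF D] LIMSEQ_const_iff)
qed

lemma suminf_pow_solves:
  assumes D: "Ck_on 1 {a..b} D" "mean a b D = 0" and x: "x \<in> {a..b}"
  shows "(\<Sum>k. (L ^^ k) D x) - L (\<lambda>x. \<Sum>k. (L ^^ k) D x) x = D x"
proof -
  note ab = a_less_b
  define S where "S m = (\<lambda>x. \<Sum>k<m. (L ^^ k) D x)" for m
  define F where "F = (\<lambda>x. \<Sum>k. (L ^^ k) D x)"
  have C1_S: "Ck_on 1 {a..b} (S m)" for m
    unfolding S_def by (intro C1_sum[OF ab finite_lessThan C1_pow[OF D(1)]])
  have C1_F: "Ck_on 1 {a..b} F"
    unfolding F_def by (rule C1_suminf_pow[OF D])
  have "(\<lambda>m. S (Suc m) x) \<longlonglongrightarrow> F x"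
    unfolding S_def F_def by (intro LIMSEQ_Suc summable_LIMSEQ summable_pow[OF D x])
  moreover have "L (S m) x = S (Suc m) x - D x" for m
  proof -
    have "L (S m) x = (\<Sum>k<m. L ((L ^^ k) D) x)"
      unfolding S_def by (rule apply_sum[OF finite_lessThan C1_pow[OF D(1)] x])
    moreover have "S (Suc m) x = D x + (\<Sum>k<m. L ((L ^^ k) D) x)"
      unfolding S_def by (subst sum.lessThan_Suc_shift) simp
    ultimately show ?thesis
      by simp
  qed
  ultimately have "(\<lambda>m. L (S m) x) \<longlonglongrightarrow> F x - D x"
    by (simp add: tendsto_diff)
  moreover have "(\<lambda>m. L (S m) x - L F x) \<longlonglongrightarrow> 0"
  proof (rule Lim_null_comparison[OF always_eventually])
    show "\<forall>m. norm (L (S m) x - L F x) \<le> C * C1norm a b (\<lambda>x. S m x - F x)"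
    proof
      fix m
      have C1_SF: "Ck_on 1 {a..b} (\<lambda>x. S m x - F x)"
        by (rule C1_diff[OF ab C1_S C1_F])
      have "mean a b (\<lambda>x. S m x - F x) = 0"
        using mean_diff[OF ab C1_imp_continuous_on[OF C1_S] C1_imp_continuous_on[OF C1_F]]
          mean_partial_sums[OF D] mean_suminf_pow[OF D] by (simp add: S_def F_def)
      then have "C1norm a b (L (\<lambda>x. S m x - F x)) \<le> C * C1norm a b (\<lambda>x. S m x - F x)"
        by (rule C1norm_apply_le[OF C1_SF])
      then show "norm (L (S m) x - L F x) \<le> C * C1norm a b (\<lambda>x. S m x - F x)"
        using abs_le_C1norm[OF C1_apply[OF C1_SF] x] apply_diff[OF C1_S C1_F x] by simp
    qed
    show "(\<lambda>m. C * C1norm a b (\<lambda>x. S m x - F x)) \<longlonglongrightarrow> 0"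
      using tendsto_mult_right_zero[OF partial_sums_tendsto[OF D]] by (simp add: S_def F_def)
  qed
  then have "(\<lambda>m. L (S m) x) \<longlonglongrightarrow> L F x"
    by (simp add: LIM_zero_iff)
  ultimately show ?thesis
    using LIMSEQ_unique unfolding F_def by fastforce
qed

lemma
  assumes D: "Ck_on 1 {a..b} D" "mean a b D = 0"
  shows C1_neumann: "Ck_on 1 {a..b} (neumann D)"
    and mean_neumann: "mean a b (neumann D) = 0"
    and neumann_solves: "x \<in> {a..b} \<Longrightarrow> neumann D x - L (neumann D) x = D x"
proof -
  have eq: "neumann D x = (\<Sum>k. (L ^^ k) D x)" if "x \<in> {a..b}" for x
    using that by (simp add: neumann_def)
  show "Ck_on 1 {a..b} (neumann D)"
    using C1_cong[OF C1_suminf_pow[OF D]] eq by metis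
  show "mean a b (neumann D) = 0"
    using mean_cong[OF eq] mean_suminf_pow[OF D] by simp
  show "x \<in> {a..b} \<Longrightarrow> neumann D x - L (neumann D) x = D x"
    using suminf_pow_solves[OF D] eq apply_cong[OF eq] by simp
qed

end

section \<open>The random transfer operators\<close>

locale random_perturbation =
  fixes a b :: real and M :: "'w measure" and Z :: "nat set"
    and I :: "nat \<Rightarrow> 'w \<Rightarrow> real set" and T :: "'w \<Rightarrow> real \<Rightarrow> real"
    and g :: "nat \<Rightarrow> 'w \<Rightarrow> real \<Rightarrow> real"
    and P :: "real \<Rightarrow> 'w measure" and V :: "real set"
    and h :: "real \<Rightarrow> real \<Rightarrow> real"
  assumes sys: "branch_system a b Z I T g"
    and V: "open V" "0 \<in> V"
    and P: "\<And>\<epsilon>. \<epsilon> \<in> V \<Longrightarrow> prob_space (P \<epsilon>) \<and> sets (P \<epsilon>) = sets M"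
    and gap: "uniform_spectral_gap_C1 a b V (\<lambda>\<epsilon>. LP a b Z I g (P \<epsilon>))"
    and stat: "\<And>\<epsilon>. \<epsilon> \<in> V \<Longrightarrow>
        stationary_density a b (LP a b Z I g (P \<epsilon>)) (h \<epsilon>) \<and> Ck_on 2 {a..b} (h \<epsilon>) \<and>
        (\<forall>h'. stationary_density a b (LP a b Z I g (P \<epsilon>)) h' \<longrightarrow>
               (AE x in mX a b. h' x = h \<epsilon> x))"
    and B1_diff: "\<And>z \<epsilon> x. z \<in> Z \<Longrightarrow> \<epsilon> \<in> V \<Longrightarrow> x \<in> {a..b} \<Longrightarrow>
        (\<lambda>e. psi a b I g P (h 0) z e x) differentiable (at \<epsilon>) \<and>
        (\<lambda>y. psi a b I g P (h 0) z \<epsilon> y) differentiable (at x within {a..b}) \<and>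
        (\<lambda>y. d_eps (psi a b I g P (h 0) z) \<epsilon> y) differentiable (at x within {a..b}) \<and>
        (\<lambda>e. d_x a b (psi a b I g P (h 0) z) e x) differentiable (at \<epsilon>)"
    and B1_cont: "\<And>z. z \<in> Z \<Longrightarrow>
        continuous_on (V \<times> {a..b}) (\<lambda>(e, y). d_eps (psi a b I g P (h 0) z) e y) \<and>
        continuous_on (V \<times> {a..b}) (\<lambda>(e, y). d_x a b (psi a b I g P (h 0) z) e y) \<and>
        continuous_on (V \<times> {a..b}) (\<lambda>(e, y). d_x a b (d_eps (psi a b I g P (h 0) z)) e y) \<and>
        continuous_on (V \<times> {a..b}) (\<lambda>(e, y). d_eps (d_x a b (psi a b I g P (h 0) z)) e y)"
    and B1_sum: "sum_sup Z V {a..b} (\<lambda>z. d_eps (psi a b I g P (h 0) z)) < \<top>"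
                "sum_sup Z V {a..b} (\<lambda>z. d_eps (d_x a b (psi a b I g P (h 0) z))) < \<top>"
    and B2: "\<And>\<Phi>. Ck_on 1 {a..b} \<Phi> \<Longrightarrow>
        (\<forall>z\<in>Z. \<forall>\<epsilon>\<in>V. \<forall>x\<in>{a..b}.
            integrable (P \<epsilon>) (\<lambda>\<omega>. bterm a b I g \<Phi> z \<omega> x) \<and>
            (\<lambda>y. psi a b I g P \<Phi> z \<epsilon> y) differentiable (at x within {a..b})) \<and>
        (\<forall>z\<in>Z. continuous_on (V \<times> {a..b}) (\<lambda>(e, y). psi a b I g P \<Phi> z e y) \<and>
                continuous_on (V \<times> {a..b}) (\<lambda>(e, y). d_x a b (psi a b I g P \<Phi> z) e y)) \<and>
        sum_sup Z V {a..b} (psi a b I g P \<Phi>) < \<top> \<and>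
        sum_sup Z V {a..b} (\<lambda>z. d_x a b (psi a b I g P \<Phi> z)) < \<top>"
begin

abbreviation "L e \<equiv> LP a b Z I g (P e)"
abbreviation "Psi \<Phi> \<equiv> zero_ext Z (psi a b I g P \<Phi>)"
abbreviation "dPsi \<Phi> \<equiv> zero_ext Z (\<lambda>z. d_x a b (psi a b I g P \<Phi> z))"

lemma a_less_b: "a < b"
  using sys unfolding branch_system_def by auto

lemma branch_in_interval:
  assumes "z \<in> Z" "I z \<omega> \<noteq> {}" "x \<in> {a..b}"
  shows "g z \<omega> x \<in> {a..b}"
proof -
  obtain c d where cd: "a \<le> c" "c < d" "d \<le> b" "I z \<omega> = {c<..<d}" "g z \<omega> ` {a..b} \<subseteq> closure (I z \<omega>)"
    using sys assms(1,2) unfolding branch_system_def by metis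
  have "g z \<omega> x \<in> closure (I z \<omega>)"
    using cd(5) assms(3) by blast
  then show ?thesis
    using cd(1-4) by auto
qed

lemma L_cong:
  assumes "\<And>y. y \<in> {a..b} \<Longrightarrow> \<phi> y = \<psi> y" "x \<in> {a..b}"
  shows "L e \<phi> x = L e \<psi> x"
proof -
  have "bterm a b I g \<phi> z \<omega> x = bterm a b I g \<psi> z \<omega> x" if "z \<in> Z" for z \<omega>
    using branch_in_interval[OF that _ assms(2)] assms(1) unfolding bterm_def by auto
  then show ?thesis
    unfolding LP_def LT_def by (simp cong: infsum_cong)
qed

lemma L_C1: "e \<in> V \<Longrightarrow> Ck_on 1 {a..b} \<phi> \<Longrightarrow> Ck_on 1 {a..b} (L e \<phi>)"
  using gap unfolding uniform_spectral_gap_C1_def by blast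

lemma
  assumes "Ck_on 1 {a..b} \<Phi>" "z \<in> Z" "e \<in> V" "x \<in> {a..b}"
  shows integrable_bterm: "integrable (P e) (\<lambda>\<omega>. bterm a b I g \<Phi> z \<omega> x)"
    and psi_differentiable: "(\<lambda>y. psi a b I g P \<Phi> z e y) differentiable (at x within {a..b})"
  using B2[OF assms(1)] assms(2-4) by auto

lemma
  assumes "Ck_on 1 {a..b} \<Phi>"
  shows continuous_on_Psi: "continuous_on (V \<times> {a..b}) (\<lambda>(e, x). Psi \<Phi> n e x)"
    and continuous_on_dPsi: "continuous_on (V \<times> {a..b}) (\<lambda>(e, x). dPsi \<Phi> n e x)"
  using B2[OF assms] by (auto intro!: continuous_on_zero_ext)

lemma Psi_bound:
  assumes "Ck_on 1 {a..b} \<Phi>"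
  obtains B where "summable B" "\<And>n e x. e \<in> V \<Longrightarrow> x \<in> {a..b} \<Longrightarrow> \<bar>Psi \<Phi> n e x\<bar> \<le> B n"
    "\<And>n e x. e \<in> V \<Longrightarrow> x \<in> {a..b} \<Longrightarrow> \<bar>dPsi \<Phi> n e x\<bar> \<le> B n"
proof -
  obtain B0 B1 where B0: "summable B0" "\<And>n e x. e \<in> V \<Longrightarrow> x \<in> {a..b} \<Longrightarrow> \<bar>Psi \<Phi> n e x\<bar> \<le> B0 n"
    and B1: "summable B1" "\<And>n e x. e \<in> V \<Longrightarrow> x \<in> {a..b} \<Longrightarrow> \<bar>dPsi \<Phi> n e x\<bar> \<le> B1 n"
    using B2[OF assms] summable_bound_of_sum_sup by metis
  have "0 \<le> B0 n" "0 \<le> B1 n" for n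
    using B0(2)[OF V(2), of a n] B1(2)[OF V(2), of a n] a_less_b by force+
  with B0 B1 show ?thesis
    by (intro that[of "\<lambda>n. B0 n + B1 n"] summable_add) (auto intro: add_increasing add_increasing2)
qed

lemma integrable_zero_ext_bterm:
  assumes "Ck_on 1 {a..b} \<phi>" "e \<in> V" "x \<in> {a..b}"
  shows "integrable (P e) (\<lambda>\<omega>. zero_ext Z (bterm a b I g \<phi>) n \<omega> x)"
  using integrable_bterm[OF assms(1) _ assms(2,3)] by (cases "n \<in> Z") (auto simp: zero_ext_def)

(* |bterm Phi| <= sup |Phi| * bterm 1, so (B2) for the constant 1 bounds the absolute integrals
  for every Phi. *)

lemma summable_integral_abs_bterm:
  assumes \<phi>: "Ck_on 1 {a..b} \<phi>" and e: "e \<in> V" and x: "x \<in> {a..b}"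
  shows "summable (\<lambda>n. \<integral>\<omega>. \<bar>zero_ext Z (bterm a b I g \<phi>) n \<omega> x\<bar> \<partial>P e)"
proof -
  interpret Q: prob_space "P e"
    using P[OF e] by blast
  define K where "K = C1norm a b \<phi>"
  have K: "0 \<le> K" "\<And>y. y \<in> {a..b} \<Longrightarrow> \<bar>\<phi> y\<bar> \<le> K"
    unfolding K_def using C1norm_nonneg[OF \<phi>] abs_le_C1norm[OF \<phi>] a_less_b by auto
  have C1_one: "Ck_on 1 {a..b} (\<lambda>_. 1)"
    by (rule C1_const[OF a_less_b])
  have le: "\<bar>zero_ext Z (bterm a b I g \<phi>) n \<omega> x\<bar> \<le> K * zero_ext Z (bterm a b I g (\<lambda>_. 1)) n \<omega> x"
    for n \<omega>
    using branch_in_interval[OF _ _ x] K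
    by (auto simp: zero_ext_def bterm_def abs_mult intro!: mult_right_mono)
  obtain B where B: "summable B" "\<And>n. \<bar>Psi (\<lambda>_. 1) n e x\<bar> \<le> B n"
    using Psi_bound[OF C1_one] e x by metis
  have bound: "(\<integral>\<omega>. \<bar>zero_ext Z (bterm a b I g \<phi>) n \<omega> x\<bar> \<partial>P e) \<le> K * B n" for n
  proof -
    have "(\<integral>\<omega>. \<bar>zero_ext Z (bterm a b I g \<phi>) n \<omega> x\<bar> \<partial>P e) \<le>
        (\<integral>\<omega>. K * zero_ext Z (bterm a b I g (\<lambda>_. 1)) n \<omega> x \<partial>P e)"
      using integrable_zero_ext_bterm[OF \<phi> e x] integrable_zero_ext_bterm[OF C1_one e x] le
      by (intro integral_mono) auto
    also have "\<dots> = K * Psi (\<lambda>_. 1) n e x"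
      by (simp add: zero_ext_def psi_def)
    also have "\<dots> \<le> K * B n"
      using B(2)[of n] K(1) by (intro mult_left_mono) auto
    finally show ?thesis .
  qed
  have "summable (\<lambda>n. K * B n)"
    using B(1) by (rule summable_mult)
  then show ?thesis
    by (rule summable_comparison_test') (simp add: bound integral_nonneg_AE)
qed

lemma L_eq_suminf:
  assumes e: "e \<in> V" and \<phi>: "Ck_on 1 {a..b} \<phi>" and x: "x \<in> {a..b}"
  shows "L e \<phi> x = (\<Sum>n. Psi \<phi> n e x)"
proof -
  define f where "f n \<omega> = zero_ext Z (bterm a b I g \<phi>) n \<omega> x" for n \<omega>
  have int_f [measurable]: "integrable (P e) (f n)" for n
    unfolding f_def by (rule integrable_zero_ext_bterm[OF \<phi> e x])
  have sum_int: "summable (\<lambda>n. \<integral>\<omega>. \<bar>f n \<omega>\<bar> \<partial>P e)"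
    unfolding f_def by (rule summable_integral_abs_bterm[OF \<phi> e x])
  have AE_sum: "AE \<omega> in P e. summable (\<lambda>n. \<bar>f n \<omega>\<bar>)"
    by (rule AE_summable_of_summable_integral[OF int_f sum_int])
  have summable_iff: "summable (\<lambda>n. \<bar>f n \<omega>\<bar>) \<longleftrightarrow> (\<Sum>n. ennreal \<bar>f n \<omega>\<bar>) \<noteq> \<top>" for \<omega>
  proof
    show "summable (\<lambda>n. \<bar>f n \<omega>\<bar>) \<Longrightarrow> (\<Sum>n. ennreal \<bar>f n \<omega>\<bar>) \<noteq> \<top>"
      by (rule ennreal_suminf_neq_top) simp_all
    show "(\<Sum>n. ennreal \<bar>f n \<omega>\<bar>) \<noteq> \<top> \<Longrightarrow> summable (\<lambda>n. \<bar>f n \<omega>\<bar>)"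
      by (rule summable_suminf_not_top) simp_all
  qed
  have LT_eq: "LT a b Z I g \<omega> \<phi> x = (if (\<Sum>n. ennreal \<bar>f n \<omega>\<bar>) \<noteq> \<top> then \<Sum>n. f n \<omega> else 0)" for \<omega>
    unfolding LT_def infsum_nat_eq_suminf summable_iff[symmetric] by (simp add: f_def zero_ext_def)
  have "L e \<phi> x = (\<integral>\<omega>. (if (\<Sum>n. ennreal \<bar>f n \<omega>\<bar>) \<noteq> \<top> then \<Sum>n. f n \<omega> else 0) \<partial>P e)"
    unfolding LP_def LT_eq ..
  also have "\<dots> = (\<integral>\<omega>. (\<Sum>n. f n \<omega>) \<partial>P e)"
    using AE_sum by (intro integral_cong_AE) (auto simp: summable_iff elim: eventually_mono)
  also have "\<dots> = (\<Sum>n. integral\<^sup>L (P e) (f n))"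
    using int_f AE_sum sum_int by (intro integral_suminf) auto
  also have "\<dots> = (\<Sum>n. Psi \<phi> n e x)"
    by (rule suminf_cong) (simp add: f_def[abs_def] zero_ext_def psi_def)
  finally show ?thesis .
qed

lemma summable_Psi:
  assumes "Ck_on 1 {a..b} \<phi>" "e \<in> V" "x \<in> {a..b}"
  shows "summable (\<lambda>n. Psi \<phi> n e x)" "summable (\<lambda>n. dPsi \<phi> n e x)"
proof -
  obtain B where "summable B" "\<And>n. \<bar>Psi \<phi> n e x\<bar> \<le> B n" "\<And>n. \<bar>dPsi \<phi> n e x\<bar> \<le> B n"
    using Psi_bound[OF assms(1)] assms(2,3) by metis
  then show "summable (\<lambda>n. Psi \<phi> n e x)" "summable (\<lambda>n. dPsi \<phi> n e x)"
    by (auto intro: summable_comparison_test')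
qed

lemma L_linear:
  assumes e: "e \<in> V" and C1: "Ck_on 1 {a..b} \<phi>" "Ck_on 1 {a..b} \<psi>" and x: "x \<in> {a..b}"
  shows "L e (\<lambda>y. c * \<phi> y + d * \<psi> y) x = c * L e \<phi> x + d * L e \<psi> x"
proof -
  have "Psi (\<lambda>y. c * \<phi> y + d * \<psi> y) n e x = c * Psi \<phi> n e x + d * Psi \<psi> n e x" for n
  proof (cases "n \<in> Z")
    case True
    have "bterm a b I g (\<lambda>y. c * \<phi> y + d * \<psi> y) n \<omega> x =
        c * bterm a b I g \<phi> n \<omega> x + d * bterm a b I g \<psi> n \<omega> x" for \<omega>
      by (simp add: bterm_def algebra_simps)
    then show ?thesis
      using True integrable_bterm[OF C1(1) True e x] integrable_bterm[OF C1(2) True e x]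
      by (simp add: zero_ext_def psi_def)
  qed (simp add: zero_ext_def)
  then show ?thesis
    using summable_Psi(1)[OF C1(1) e x] summable_Psi(1)[OF C1(2) e x]
    by (simp add: L_eq_suminf[OF e _ x] C1_linear[OF a_less_b C1] C1 suminf_add[symmetric]
        suminf_mult summable_mult)
qed

lemma
  assumes "Ck_on 1 {a..b} \<phi>" "e \<in> V"
  shows C1_Psi: "Ck_on 1 {a..b} (\<lambda>x. Psi \<phi> n e x)"
    and dX_Psi: "x \<in> {a..b} \<Longrightarrow> dX a b (\<lambda>x. Psi \<phi> n e x) x = dPsi \<phi> n e x"
proof -
  have "continuous_on {a..b} (\<lambda>x. (e, x))"
    by (intro continuous_intros)
  moreover have "(\<lambda>x. (e, x)) ` {a..b} \<subseteq> V \<times> {a..b}"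
    using assms(2) by auto
  ultimately have cont: "continuous_on {a..b} (\<lambda>x. dPsi \<phi> n e x)"
    using continuous_on_compose2[OF continuous_on_dPsi[OF assms(1)], of "{a..b}" "\<lambda>x. (e, x)"] by simp
  show "Ck_on 1 {a..b} (\<lambda>x. Psi \<phi> n e x)"
  proof (cases "n \<in> Z")
    case True
    then have "(\<lambda>x. Psi \<phi> n e x) = psi a b I g P \<phi> n e"
      by (simp add: zero_ext_def fun_eq_iff)
    moreover have "Ck_on 1 {a..b} (psi a b I g P \<phi> n e)"
      unfolding C1_on_iff using psi_differentiable[OF assms(1) True assms(2)] cont True
      by (simp add: zero_ext_def d_x_def dX_def)
    ultimately show ?thesis
      by simp
  qed (simp add: zero_ext_def C1_const[OF a_less_b])
  show "x \<in> {a..b} \<Longrightarrow> dX a b (\<lambda>x. Psi \<phi> n e x) x = dPsi \<phi> n e x"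
    using dX_const[OF a_less_b] by (cases "n \<in> Z") (simp_all add: zero_ext_def d_x_def)
qed

lemma dX_L_eq_suminf:
  assumes e: "e \<in> V" and \<phi>: "Ck_on 1 {a..b} \<phi>" and x: "x \<in> {a..b}"
  shows "dX a b (L e \<phi>) x = (\<Sum>n. dPsi \<phi> n e x)"
proof -
  obtain B where B: "summable B" "\<And>n y. y \<in> {a..b} \<Longrightarrow> \<bar>Psi \<phi> n e y\<bar> \<le> B n"
    "\<And>n y. y \<in> {a..b} \<Longrightarrow> \<bar>dPsi \<phi> n e y\<bar> \<le> B n"
    using Psi_bound[OF \<phi>] e by metis
  have "dX a b (L e \<phi>) x = dX a b (\<lambda>y. \<Sum>n. Psi \<phi> n e y) x"
    using L_eq_suminf[OF e \<phi>] by (intro dX_cong[OF x]) simp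
  also have "\<dots> = (\<Sum>n. dX a b (\<lambda>y. Psi \<phi> n e y) x)"
    using B dX_Psi[OF \<phi> e] by (intro dX_suminf[OF a_less_b C1_Psi[OF \<phi> e] _ _ B(1) x]) auto
  finally show ?thesis
    using dX_Psi[OF \<phi> e x] by simp
qed

lemma C1_h: "e \<in> V \<Longrightarrow> Ck_on 1 {a..b} (h e)"
  using stat C2_imp_C1 by blast

lemma mean_h: "e \<in> V \<Longrightarrow> mean a b (h e) = 1"
  using stat[of e] mean_eq_integral[OF a_less_b _ C1_imp_continuous_on[OF C1_h]]
  unfolding stationary_density_def by auto

lemma L_fixed_point: "e \<in> V \<Longrightarrow> x \<in> {a..b} \<Longrightarrow> L e (h e) x = h e x"
  using stat[of e] AE_mX_eq_imp_eq[OF a_less_b C1_imp_continuous_on[OF L_C1[OF _ C1_h]]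
      C1_imp_continuous_on[OF C1_h]]
  unfolding stationary_density_def by blast

lemma C1_operator_L: "e \<in> V \<Longrightarrow> C1_operator a b (L e)"
  by unfold_locales (auto intro: a_less_b L_C1 L_cong L_linear)

lemma uniform_gap_bound:
  "\<exists>\<theta> C. 0 < \<theta> \<and> \<theta> < 1 \<and> 1 \<le> C \<and> (\<forall>e\<in>V. \<forall>n \<phi>. Ck_on 1 {a..b} \<phi> \<and> mean a b \<phi> = 0 \<longrightarrow>
     C1norm a b ((L e ^^ n) \<phi>) \<le> C * \<theta> ^ n * C1norm a b \<phi>)"
proof -
  obtain \<theta> C0 where \<theta>: "0 < \<theta>" "\<theta> < 1" "0 < C0" and gap0: "\<forall>e\<in>V. \<forall>n\<ge>1. \<forall>\<phi>.
      Ck_on 1 {a..b} \<phi> \<and> integral\<^sup>L (mX a b) \<phi> = 0 \<longrightarrow>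
      C1norm a b ((L e ^^ n) \<phi>) \<le> C0 * \<theta> ^ n * C1norm a b \<phi>"
    using gap unfolding uniform_spectral_gap_C1_def by blast
  define C where "C = max C0 1"
  have "C1norm a b ((L e ^^ n) \<phi>) \<le> C * \<theta> ^ n * C1norm a b \<phi>"
    if e: "e \<in> V" and \<phi>: "Ck_on 1 {a..b} \<phi>" "mean a b \<phi> = 0" for e n \<phi>
  proof (cases "n = 0")
    case True
    have "1 * C1norm a b \<phi> \<le> C * C1norm a b \<phi>"
      using C1norm_nonneg[OF \<phi>(1)] a_less_b by (intro mult_right_mono) (auto simp: C_def)
    with True show ?thesis
      by simp
  next
    case False
    interpret C1_operator a b "L e"
      by (rule C1_operator_L[OF e])
    have cutoff: "Ck_on 1 {a..b} (cutoff a b \<phi>)" "integral\<^sup>L (mX a b) (cutoff a b \<phi>) = 0"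
      using C1_cong[OF \<phi>(1)] \<phi>(2) by (auto simp: mean_def)
    have "C1norm a b ((L e ^^ n) \<phi>) = C1norm a b ((L e ^^ n) (cutoff a b \<phi>))"
      by (intro C1norm_cong pow_cong) simp_all
    also have "\<dots> \<le> C0 * \<theta> ^ n * C1norm a b (cutoff a b \<phi>)"
      using gap0 e False cutoff by simp
    also have "\<dots> \<le> C * \<theta> ^ n * C1norm a b \<phi>"
      using C1norm_cong[of a b "cutoff a b \<phi>" \<phi>] C1norm_nonneg[OF \<phi>(1)] a_less_b \<theta>
      by (auto simp: C_def intro!: mult_right_mono)
    finally show ?thesis .
  qed
  moreover have "1 \<le> C"
    by (simp add: C_def)
  ultimately show ?thesis
    using \<theta>(1,2) by blast
qed

lemma gap_operators:
  obtains C \<theta> where "\<And>e. e \<in> V \<Longrightarrow> C1_gap_operator a b (L e) C \<theta>"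
proof -
  obtain \<theta> C where \<theta>: "0 < \<theta>" "\<theta> < 1" "1 \<le> C" and gap': "\<And>e n \<phi>. e \<in> V \<Longrightarrow>
      Ck_on 1 {a..b} \<phi> \<Longrightarrow> mean a b \<phi> = 0 \<Longrightarrow> C1norm a b ((L e ^^ n) \<phi>) \<le> C * \<theta> ^ n * C1norm a b \<phi>"
    using uniform_gap_bound by auto
  have "C1_gap_operator a b (L e) C \<theta>" if e: "e \<in> V" for e
  proof -
    interpret C1_operator a b "L e"
      by (rule C1_operator_L[OF e])
    show ?thesis
    proof
      show "mean a b (L e \<phi>) = mean a b \<phi>" if "Ck_on 1 {a..b} \<phi>" for \<phi>
        using mean_preserving_of_gap[OF gap'[OF e] _ _ C1_h[OF e] L_fixed_point[OF e] mean_h[OF e] that] \<theta>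
        by simp
    qed (use \<theta> gap'[OF e] in auto)
  qed
  then show ?thesis
    by (rule that)
qed

lemma mean_L: "e \<in> V \<Longrightarrow> Ck_on 1 {a..b} \<phi> \<Longrightarrow> mean a b (L e \<phi>) = mean a b \<phi>"
  by (metis gap_operators C1_gap_operator.mean_preserving)

lemma eventually_in_V: "eventually (\<lambda>e. e \<in> V) (at 0)"
  by (rule eventually_at_in_open'[OF V])

lemma L_tendsto:
  assumes \<phi>: "Ck_on 1 {a..b} \<phi>"
  shows "((\<lambda>e. C1norm a b (\<lambda>x. L e \<phi> x - L 0 \<phi> x)) \<longlongrightarrow> 0) (at 0)"
proof -
  obtain B where B: "summable B" "\<And>n e x. e \<in> V \<Longrightarrow> x \<in> {a..b} \<Longrightarrow> \<bar>Psi \<phi> n e x\<bar> \<le> B n"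
    "\<And>n e x. e \<in> V \<Longrightarrow> x \<in> {a..b} \<Longrightarrow> \<bar>dPsi \<phi> n e x\<bar> \<le> B n"
    using Psi_bound[OF \<phi>] by metis
  have "uniform_limit {a..b} (\<lambda>e x. \<Sum>n. Psi \<phi> n e x) (\<lambda>x. \<Sum>n. Psi \<phi> n 0 x) (at 0)"
    by (rule uniform_limit_suminf_at[OF V compact_Icc continuous_on_Psi[OF \<phi>] B(2,1)])
  then have lim: "uniform_limit {a..b} (\<lambda>e. L e \<phi>) (L 0 \<phi>) (at 0)"
    by (rule uniform_limit_cong[THEN iffD1, rotated -1])
      (use eventually_in_V in \<open>auto elim!: eventually_mono simp: L_eq_suminf[OF _ \<phi>] V(2)\<close>)
  have "uniform_limit {a..b} (\<lambda>e x. \<Sum>n. dPsi \<phi> n e x) (\<lambda>x. \<Sum>n. dPsi \<phi> n 0 x) (at 0)"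
    by (rule uniform_limit_suminf_at[OF V compact_Icc continuous_on_dPsi[OF \<phi>] B(3,1)])
  then have lim': "uniform_limit {a..b} (\<lambda>e. dX a b (L e \<phi>)) (dX a b (L 0 \<phi>)) (at 0)"
    by (rule uniform_limit_cong[THEN iffD1, rotated -1])
      (use eventually_in_V in \<open>auto elim!: eventually_mono simp: dX_L_eq_suminf[OF _ \<phi>] V(2)\<close>)
  have "eventually (\<lambda>e. Ck_on 1 {a..b} (L e \<phi>)) (at 0)"
    using eventually_in_V by eventually_elim (rule L_C1[OF _ \<phi>])
  then show ?thesis
    by (rule C1norm_diff_tendsto_0[OF a_less_b _ L_C1[OF V(2) \<phi>] lim lim'])
qed

section \<open>Linear response\<close>

(* The derivative of L_e h_0 at e = 0, as a series over the branches. *)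
definition dLh :: "real \<Rightarrow> real" where
  "dLh x = (\<Sum>n. zero_ext Z (\<lambda>z. d_eps (psi a b I g P (h 0) z)) n 0 x)"

lemma uniform_limit_Lh_quotient:
  "uniform_limit {a..b} (\<lambda>e x. (L e (h 0) x - h 0 x) / e) dLh (at 0)"
proof -
  obtain B where B: "summable B"
    "\<And>n e x. e \<in> V \<Longrightarrow> x \<in> {a..b} \<Longrightarrow> \<bar>zero_ext Z (\<lambda>z. d_eps (psi a b I g P (h 0) z)) n e x\<bar> \<le> B n"
    using summable_bound_of_sum_sup[OF B1_sum(1)] by metis
  have lim: "uniform_limit {a..b} (\<lambda>e x. \<Sum>n. (Psi (h 0) n e x - Psi (h 0) n 0 x) / e) dLh (at 0)"
    unfolding dLh_def
  proof (rule uniform_limit_suminf_difference_quotient[OF V compact_Icc _ _ B(2,1)])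
    fix n s x assume "s \<in> V" "x \<in> {a..b}"
    then show "((\<lambda>e. Psi (h 0) n e x) has_real_derivative
        zero_ext Z (\<lambda>z. d_eps (psi a b I g P (h 0) z)) n s x) (at s)"
      using B1_diff by (intro has_real_derivative_zero_ext)
        (simp add: d_eps_def DERIV_deriv_iff_real_differentiable)
  next
    fix n
    show "continuous_on (V \<times> {a..b}) (\<lambda>(e, x). zero_ext Z (\<lambda>z. d_eps (psi a b I g P (h 0) z)) n e x)"
      using B1_cont by (intro continuous_on_zero_ext) blast
  qed
  have eq: "(L e (h 0) x - h 0 x) / e = (\<Sum>n. (Psi (h 0) n e x - Psi (h 0) n 0 x) / e)"
    if "e \<in> V" "x \<in> {a..b}" for e x
  proof -
    have "h 0 x = L 0 (h 0) x"
      using L_fixed_point[OF V(2) that(2)] by simp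
    then show ?thesis
      using L_eq_suminf[OF _ C1_h[OF V(2)] that(2)] summable_Psi(1)[OF C1_h[OF V(2)] _ that(2)] that(1) V(2)
      by (simp add: suminf_diff suminf_divide summable_diff)
  qed
  from lim show ?thesis
    by (rule uniform_limit_cong[THEN iffD1, rotated -1])
      (use eq eventually_in_V in \<open>auto elim!: eventually_mono\<close>)
qed

lemma
  assumes e: "e \<in> V"
  shows C1_Lh_quotient: "Ck_on 1 {a..b} (\<lambda>x. (L e (h 0) x - h 0 x) / e)"
    and dX_Lh_quotient: "x \<in> {a..b} \<Longrightarrow>
      dX a b (\<lambda>x. (L e (h 0) x - h 0 x) / e) x = (dX a b (L e (h 0)) x - dX a b (h 0) x) / e"
proof -
  have eq: "(\<lambda>x. (L e (h 0) x - h 0 x) / e) = (\<lambda>x. (1 / e) * L e (h 0) x + (- 1 / e) * h 0 x)"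
    by (simp add: fun_eq_iff diff_divide_distrib)
  show "Ck_on 1 {a..b} (\<lambda>x. (L e (h 0) x - h 0 x) / e)"
    unfolding eq by (rule C1_linear[OF a_less_b L_C1[OF e C1_h[OF V(2)]] C1_h[OF V(2)]])
  show "x \<in> {a..b} \<Longrightarrow> dX a b (\<lambda>x. (L e (h 0) x - h 0 x) / e) x = (dX a b (L e (h 0)) x - dX a b (h 0) x) / e"
    unfolding eq using dX_linear[OF a_less_b L_C1[OF e C1_h[OF V(2)]] C1_h[OF V(2)], of x "1 / e" "- 1 / e"]
    by (simp add: diff_divide_distrib)
qed

lemma uniform_limit_dX_Lh_quotient:
  "uniform_limit {a..b} (\<lambda>e. dX a b (\<lambda>x. (L e (h 0) x - h 0 x) / e))
     (\<lambda>x. \<Sum>n. zero_ext Z (\<lambda>z. d_eps (d_x a b (psi a b I g P (h 0) z))) n 0 x) (at 0)"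
proof -
  obtain B where B: "summable B" "\<And>n e x. e \<in> V \<Longrightarrow> x \<in> {a..b} \<Longrightarrow>
      \<bar>zero_ext Z (\<lambda>z. d_eps (d_x a b (psi a b I g P (h 0) z))) n e x\<bar> \<le> B n"
    using summable_bound_of_sum_sup[OF B1_sum(2)] by metis
  have lim: "uniform_limit {a..b} (\<lambda>e x. \<Sum>n. (dPsi (h 0) n e x - dPsi (h 0) n 0 x) / e)
      (\<lambda>x. \<Sum>n. zero_ext Z (\<lambda>z. d_eps (d_x a b (psi a b I g P (h 0) z))) n 0 x) (at 0)"
  proof (rule uniform_limit_suminf_difference_quotient[OF V compact_Icc _ _ B(2,1)])
    fix n s x assume "s \<in> V" "x \<in> {a..b}"
    then show "((\<lambda>e. dPsi (h 0) n e x) has_real_derivative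
        zero_ext Z (\<lambda>z. d_eps (d_x a b (psi a b I g P (h 0) z))) n s x) (at s)"
      using B1_diff by (intro has_real_derivative_zero_ext)
        (simp add: d_eps_def DERIV_deriv_iff_real_differentiable)
  next
    fix n
    show "continuous_on (V \<times> {a..b})
        (\<lambda>(e, x). zero_ext Z (\<lambda>z. d_eps (d_x a b (psi a b I g P (h 0) z))) n e x)"
      using B1_cont by (intro continuous_on_zero_ext) blast
  qed
  have eq: "dX a b (\<lambda>x. (L e (h 0) x - h 0 x) / e) x = (\<Sum>n. (dPsi (h 0) n e x - dPsi (h 0) n 0 x) / e)"
    if "e \<in> V" "x \<in> {a..b}" for e x
  proof -
    have "dX a b (h 0) x = dX a b (L 0 (h 0)) x"
      using L_fixed_point[OF V(2)] by (intro dX_cong[OF that(2)]) simp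
    then show ?thesis
      using dX_Lh_quotient[OF that] dX_L_eq_suminf[OF _ C1_h[OF V(2)] that(2)]
        summable_Psi(2)[OF C1_h[OF V(2)] _ that(2)] that(1) V(2)
      by (simp add: suminf_diff suminf_divide summable_diff)
  qed
  from lim show ?thesis
    by (rule uniform_limit_cong[THEN iffD1, rotated -1])
      (use eq eventually_in_V in \<open>auto elim!: eventually_mono\<close>)
qed

lemma eventually_C1_Lh_quotient: "eventually (\<lambda>e. Ck_on 1 {a..b} (\<lambda>x. (L e (h 0) x - h 0 x) / e)) (at 0)"
  using eventually_in_V by eventually_elim (rule C1_Lh_quotient)

(* The x-derivative of dLh comes from the uniform limit of the x-derivatives of the difference
  quotients, which avoids interchanging the mixed partial derivatives of psi. *)
lemma
  shows C1_dLh: "Ck_on 1 {a..b} dLh"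
    and dX_dLh: "x \<in> {a..b} \<Longrightarrow>
      dX a b dLh x = (\<Sum>n. zero_ext Z (\<lambda>z. d_eps (d_x a b (psi a b I g P (h 0) z))) n 0 x)"
proof -
  have "filterlim (\<lambda>m. inverse (real (Suc m))) (at 0) sequentially"
    unfolding filterlim_at using LIMSEQ_inverse_real_of_nat by auto
  note lim = this eventually_C1_Lh_quotient uniform_limit_Lh_quotient uniform_limit_dX_Lh_quotient
  show "Ck_on 1 {a..b} dLh"
    by (rule C1_uniform_limit[OF a_less_b lim])
  show "x \<in> {a..b} \<Longrightarrow>
      dX a b dLh x = (\<Sum>n. zero_ext Z (\<lambda>z. d_eps (d_x a b (psi a b I g P (h 0) z))) n 0 x)"
    by (rule dX_uniform_limit[OF a_less_b lim])
qed

lemma Lh_quotient_tendsto: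
  "((\<lambda>e. C1norm a b (\<lambda>x. (L e (h 0) x - h 0 x) / e - dLh x)) \<longlongrightarrow> 0) (at 0)"
proof (rule C1norm_diff_tendsto_0[OF a_less_b eventually_C1_Lh_quotient C1_dLh uniform_limit_Lh_quotient])
  show "uniform_limit {a..b} (\<lambda>e. dX a b (\<lambda>x. (L e (h 0) x - h 0 x) / e)) (dX a b dLh) (at 0)"
    using uniform_limit_dX_Lh_quotient by (rule uniform_limit_cong[THEN iffD1, rotated -1]) (simp_all add: dX_dLh)
qed

lemma mean_dLh: "mean a b dLh = 0"
proof -
  have "mean a b (\<lambda>x. (L e (h 0) x - h 0 x) / e) = 0" if e: "e \<in> V" for e
  proof -
    have "(\<lambda>x. (L e (h 0) x - h 0 x) / e) = (\<lambda>x. (1 / e) * L e (h 0) x + (- 1 / e) * h 0 x)"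
      by (simp add: fun_eq_iff diff_divide_distrib)
    then show ?thesis
      using mean_linear[OF a_less_b C1_imp_continuous_on[OF L_C1[OF e C1_h[OF V(2)]]]
          C1_imp_continuous_on[OF C1_h[OF V(2)]], of "1 / e" "- 1 / e"] mean_L[OF e C1_h[OF V(2)]]
      by (simp add: diff_divide_distrib)
  qed
  then have "eventually (\<lambda>e. mean a b (\<lambda>x. (L e (h 0) x - h 0 x) / e) = 0) (at 0)"
    using eventually_in_V by (auto elim: eventually_mono)
  with mean_tendsto_of_C1norm[OF a_less_b eventually_C1_Lh_quotient C1_dLh Lh_quotient_tendsto]
  have "((\<lambda>e. 0) \<longlongrightarrow> mean a b dLh) (at (0::real))"
    by (rule Lim_transform_eventually)
  then show ?thesis
    by (simp add: tendsto_const_iff)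
qed

lemma has_real_derivative_L:
  assumes x: "x \<in> {a..b}"
  shows "((\<lambda>e. L e (h 0) x) has_real_derivative dLh x) (at 0)"
  using tendsto_uniform_limitI[OF uniform_limit_Lh_quotient x] L_fixed_point[OF V(2) x]
  by (simp add: has_field_derivative_iff)

lemma has_real_derivative_infsum_psi:
  assumes x: "x \<in> {a..b}"
  shows "((\<lambda>e. \<Sum>\<^sub>\<infinity>z\<in>Z. psi a b I g P (h 0) z e x) has_real_derivative dLh x) (at 0)"
proof (rule has_field_derivative_transform_within_open[OF has_real_derivative_L[OF x] V])
  fix e assume e: "e \<in> V"
  obtain B where B: "summable B" "\<And>n. \<bar>Psi (h 0) n e x\<bar> \<le> B n"
    using Psi_bound[OF C1_h[OF V(2)]] e x by metis
  have "summable (\<lambda>n. \<bar>Psi (h 0) n e x\<bar>)"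
    by (rule summable_comparison_test'[OF B(1)]) (simp add: B(2))
  then show "L e (h 0) x = (\<Sum>\<^sub>\<infinity>z\<in>Z. psi a b I g P (h 0) z e x)"
    using L_eq_suminf[OF e C1_h[OF V(2)] x] by (simp add: infsum_nat_eq_suminf zero_ext_def)
qed

lemma
  assumes e: "e \<in> V"
  shows C1_density_quotient: "Ck_on 1 {a..b} (\<lambda>x. (h e x - h 0 x) / e)"
    and mean_density_quotient: "mean a b (\<lambda>x. (h e x - h 0 x) / e) = 0"
    and density_quotient_equation: "x \<in> {a..b} \<Longrightarrow>
      (h e x - h 0 x) / e - L e (\<lambda>x. (h e x - h 0 x) / e) x = (L e (h 0) x - h 0 x) / e"
proof -
  have eq: "(\<lambda>x. (h e x - h 0 x) / e) = (\<lambda>x. (1 / e) * h e x + (- 1 / e) * h 0 x)"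
    by (simp add: fun_eq_iff diff_divide_distrib)
  note C1 = C1_h[OF e] C1_h[OF V(2)]
  show "Ck_on 1 {a..b} (\<lambda>x. (h e x - h 0 x) / e)"
    unfolding eq by (rule C1_linear[OF a_less_b C1])
  show "mean a b (\<lambda>x. (h e x - h 0 x) / e) = 0"
    unfolding eq using mean_linear[OF a_less_b C1_imp_continuous_on[OF C1(1)] C1_imp_continuous_on[OF C1(2)],
        of "1 / e" "- 1 / e"] mean_h[OF e] mean_h[OF V(2)]
    by (simp add: diff_divide_distrib)
  show "(h e x - h 0 x) / e - L e (\<lambda>x. (h e x - h 0 x) / e) x = (L e (h 0) x - h 0 x) / e"
    if x: "x \<in> {a..b}"
    unfolding eq using L_linear[OF e C1 x, of "1 / e" "- 1 / e"] L_fixed_point[OF e x]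
    by (simp add: diff_divide_distrib)
qed

lemma difference_quotient_bound:
  assumes op: "C1_gap_operator a b (L e) C \<theta>" and e: "e \<in> V"
    and hs: "Ck_on 1 {a..b} hs" "mean a b hs = 0" "\<And>x. x \<in> {a..b} \<Longrightarrow> hs x - L 0 hs x = dLh x"
  shows "C1norm a b (\<lambda>x. (h e x - h 0 x) / e - hs x) \<le>
    C / (1 - \<theta>) * C1norm a b (\<lambda>x. ((L e (h 0) x - h 0 x) / e - dLh x) + (L e hs x - L 0 hs x))"
proof -
  interpret C1_gap_operator a b "L e" C \<theta>
    by (rule op)
  define f where "f = (\<lambda>x. (h e x - h 0 x) / e - hs x)"
  have C1_f: "Ck_on 1 {a..b} f"
    unfolding f_def by (rule C1_diff[OF a_less_b C1_density_quotient[OF e] hs(1)])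
  have mean_f: "mean a b f = 0"
    unfolding f_def
    using mean_diff[OF a_less_b C1_imp_continuous_on[OF C1_density_quotient[OF e]] C1_imp_continuous_on[OF hs(1)]]
      mean_density_quotient[OF e] hs(2) by simp
  have "f x - L e f x = ((L e (h 0) x - h 0 x) / e - dLh x) + (L e hs x - L 0 hs x)" if x: "x \<in> {a..b}" for x
    using density_quotient_equation[OF e x] apply_diff[OF C1_density_quotient[OF e] hs(1) x] hs(3)[OF x]
    unfolding f_def by simp
  then have "C1norm a b (\<lambda>x. f x - L e f x) =
      C1norm a b (\<lambda>x. ((L e (h 0) x - h 0 x) / e - dLh x) + (L e hs x - L 0 hs x))"
    by (rule C1norm_cong)
  with resolvent_bound[OF C1_f mean_f] show ?thesis
    unfolding f_def by simp
qed

lemma difference_quotient_tendsto: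
  assumes hs: "Ck_on 1 {a..b} hs" "mean a b hs = 0" "\<And>x. x \<in> {a..b} \<Longrightarrow> hs x - L 0 hs x = dLh x"
  shows "((\<lambda>e. C1norm a b (\<lambda>x. (h e x - h 0 x) / e - hs x)) \<longlongrightarrow> 0) (at 0)"
proof -
  obtain C \<theta> where op: "\<And>e. e \<in> V \<Longrightarrow> C1_gap_operator a b (L e) C \<theta>"
    using gap_operators by metis
  define r where "r e = (\<lambda>x. ((L e (h 0) x - h 0 x) / e - dLh x) + (L e hs x - L 0 hs x))" for e
  have C1_r: "Ck_on 1 {a..b} (\<lambda>x. (L e (h 0) x - h 0 x) / e - dLh x)"
    "Ck_on 1 {a..b} (\<lambda>x. L e hs x - L 0 hs x)" if "e \<in> V" for e
    using C1_diff[OF a_less_b C1_Lh_quotient[OF that] C1_dLh]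
      C1_diff[OF a_less_b L_C1[OF that hs(1)] L_C1[OF V(2) hs(1)]] by auto
  have "((\<lambda>e. C1norm a b (r e)) \<longlongrightarrow> 0) (at 0)"
  proof (rule Lim_null_comparison)
    show "\<forall>\<^sub>F e in at 0. norm (C1norm a b (r e)) \<le>
        C1norm a b (\<lambda>x. (L e (h 0) x - h 0 x) / e - dLh x) + C1norm a b (\<lambda>x. L e hs x - L 0 hs x)"
      using eventually_in_V
    proof eventually_elim
      case (elim e)
      then show ?case
        using C1norm_add_le[OF a_less_b C1_r[OF elim]] C1norm_nonneg[OF C1_linear[OF a_less_b C1_r[OF elim], of 1 1]]
          a_less_b unfolding r_def by simp
    qed
    show "((\<lambda>e. C1norm a b (\<lambda>x. (L e (h 0) x - h 0 x) / e - dLh x) +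
        C1norm a b (\<lambda>x. L e hs x - L 0 hs x)) \<longlongrightarrow> 0) (at 0)"
      using tendsto_add[OF Lh_quotient_tendsto L_tendsto[OF hs(1)]] by simp
  qed
  then have "((\<lambda>e. C / (1 - \<theta>) * C1norm a b (r e)) \<longlongrightarrow> 0) (at 0)"
    by (rule tendsto_mult_right_zero)
  moreover have "\<forall>\<^sub>F e in at 0. norm (C1norm a b (\<lambda>x. (h e x - h 0 x) / e - hs x)) \<le>
      C / (1 - \<theta>) * C1norm a b (r e)"
    using eventually_in_V
  proof eventually_elim
    case (elim e)
    then show ?case
      using difference_quotient_bound[OF op[OF elim] elim hs] a_less_b
        C1norm_nonneg[OF C1_diff[OF a_less_b C1_density_quotient[OF elim] hs(1)]]
      unfolding r_def by simp
  qed
  ultimately show ?thesis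
    by (rule Lim_null_comparison[rotated])
qed

end


theorem theorem2p3:
  fixes a b :: real and M :: "'w measure" and Z :: "nat set"
    and I :: "nat \<Rightarrow> 'w \<Rightarrow> real set" and T :: "'w \<Rightarrow> real \<Rightarrow> real"
    and g :: "nat \<Rightarrow> 'w \<Rightarrow> real \<Rightarrow> real"
    and P :: "real \<Rightarrow> 'w measure" and V :: "real set"
    and h :: "real \<Rightarrow> real \<Rightarrow> real"
  assumes sys: "branch_system a b Z I T g"
    and V: "open V" "0 \<in> V"
    and P: "\<And>\<epsilon>. \<epsilon> \<in> V \<Longrightarrow> prob_space (P \<epsilon>) \<and> sets (P \<epsilon>) = sets M"
    \<comment> \<open>(B)\<close>
    and gap: "uniform_spectral_gap_C1 a b V (\<lambda>\<epsilon>. LP a b Z I g (P \<epsilon>))"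
    and stat: "\<And>\<epsilon>. \<epsilon> \<in> V \<Longrightarrow>
        stationary_density a b (LP a b Z I g (P \<epsilon>)) (h \<epsilon>) \<and> Ck_on 2 {a..b} (h \<epsilon>) \<and>
        (\<forall>h'. stationary_density a b (LP a b Z I g (P \<epsilon>)) h' \<longrightarrow>
               (AE x in mX a b. h' x = h \<epsilon> x))"
    \<comment> \<open>(B1), with Phi = h 0\<close>
    and B1_diff: "\<And>z \<epsilon> x. z \<in> Z \<Longrightarrow> \<epsilon> \<in> V \<Longrightarrow> x \<in> {a..b} \<Longrightarrow>
        (\<lambda>e. psi a b I g P (h 0) z e x) differentiable (at \<epsilon>) \<and>
        (\<lambda>y. psi a b I g P (h 0) z \<epsilon> y) differentiable (at x within {a..b}) \<and>
        (\<lambda>y. d_eps (psi a b I g P (h 0) z) \<epsilon> y) differentiable (at x within {a..b}) \<and>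
        (\<lambda>e. d_x a b (psi a b I g P (h 0) z) e x) differentiable (at \<epsilon>)"
    and B1_cont: "\<And>z. z \<in> Z \<Longrightarrow>
        continuous_on (V \<times> {a..b}) (\<lambda>(e, y). d_eps (psi a b I g P (h 0) z) e y) \<and>
        continuous_on (V \<times> {a..b}) (\<lambda>(e, y). d_x a b (psi a b I g P (h 0) z) e y) \<and>
        continuous_on (V \<times> {a..b}) (\<lambda>(e, y). d_x a b (d_eps (psi a b I g P (h 0) z)) e y) \<and>
        continuous_on (V \<times> {a..b}) (\<lambda>(e, y). d_eps (d_x a b (psi a b I g P (h 0) z)) e y)"
    and B1_sum: "sum_sup Z V {a..b} (\<lambda>z. d_eps (psi a b I g P (h 0) z)) < \<top>"
                "sum_sup Z V {a..b} (\<lambda>z. d_eps (d_x a b (psi a b I g P (h 0) z))) < \<top>"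
    \<comment> \<open>(B2)\<close>
    and B2: "\<And>\<Phi>. Ck_on 1 {a..b} \<Phi> \<Longrightarrow>
        (\<forall>z\<in>Z. \<forall>\<epsilon>\<in>V. \<forall>x\<in>{a..b}.
            integrable (P \<epsilon>) (\<lambda>\<omega>. bterm a b I g \<Phi> z \<omega> x) \<and>
            (\<lambda>y. psi a b I g P \<Phi> z \<epsilon> y) differentiable (at x within {a..b})) \<and>
        (\<forall>z\<in>Z. continuous_on (V \<times> {a..b}) (\<lambda>(e, y). psi a b I g P \<Phi> z e y) \<and>
                continuous_on (V \<times> {a..b}) (\<lambda>(e, y). d_x a b (psi a b I g P \<Phi> z) e y)) \<and>
        sum_sup Z V {a..b} (psi a b I g P \<Phi>) < \<top> \<and>
        sum_sup Z V {a..b} (\<lambda>z. d_x a b (psi a b I g P \<Phi> z)) < \<top>"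
  shows "\<exists>hs D. Ck_on 1 {a..b} hs \<and>
     ((\<lambda>\<epsilon>. C1norm a b (\<lambda>x. (h \<epsilon> x - h 0 x) / \<epsilon> - hs x)) \<longlongrightarrow> 0) (at 0) \<and>
     (\<forall>x\<in>{a..b}. ((\<lambda>\<epsilon>. LP a b Z I g (P \<epsilon>) (h 0) x) has_real_derivative D x) (at 0) \<and>
                 ((\<lambda>\<epsilon>. \<Sum>\<^sub>\<infinity>z\<in>Z. psi a b I g P (h 0) z \<epsilon> x) has_real_derivative D x) (at 0)) \<and>
     integral\<^sup>L (mX a b) hs = 0 \<and>
     (\<forall>x\<in>{a..b}. hs x - LP a b Z I g (P 0) hs x = D x)"
proof -
  interpret random_perturbation a b M Z I T g P V h
    by (rule random_perturbation.intro[OF sys V P gap stat B1_diff B1_cont B1_sum B2])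
  obtain C \<theta> where "\<And>e. e \<in> V \<Longrightarrow> C1_gap_operator a b (L e) C \<theta>"
    using gap_operators by metis
  then interpret L0: C1_gap_operator a b "L 0" C \<theta>
    using V(2) by blast
  define hs where "hs = L0.neumann dLh"
  have hs: "Ck_on 1 {a..b} hs" "mean a b hs = 0" "\<And>x. x \<in> {a..b} \<Longrightarrow> hs x - L 0 hs x = dLh x"
    unfolding hs_def using L0.C1_neumann L0.mean_neumann L0.neumann_solves C1_dLh mean_dLh by auto
  show ?thesis
  proof (intro exI conjI ballI)
    show "integral\<^sup>L (mX a b) hs = 0"
      using hs(2) by (simp add: hs_def L0.neumann_def mean_def)
  qed (use hs difference_quotient_tendsto[OF hs] has_real_derivative_L has_real_derivative_infsum_psi in auto)
qed

end
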